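(* Let $D$ be an integral domain which is atomic or completely integrally closed, and let $R$ be a ring extension of $D$. If some prime element of $D$ is invertible in $R$, then $R$ has a conch maximal subring.
   Context: All rings are commutative with $1\neq0$ and subrings are unital. An atomic domain is one in which every nonzero nonunit is a finite product of irreducible elements. A maximal subring is a proper subring maximal with respect to inclusion among proper subrings. For a unit $x\in R$, a subring $V$ conches $x$ in $R$ if $x^{-1}\in V$, $x\notin V$ and $V$ is maximal among subrings containing $x^{-1}$ but not $x$; a conch maximal subring is a maximal subring conching some unit of $R$. *)

theory Defs
  imports "HOL-Computational_Algebra.Factorial_Ring"
          "HOL-Computational_Algebra.Polynomial_Factorial"
begin

definition is_subring :: "'a::comm_ring_1 set \<Rightarrow> bool" where
  "is_subring V \<longleftrightarrow> 1 \<in> V \<and> (\<forall>x\<in>V. \<forall>y\<in>V. x + y \<in> V \<and> x * y \<in> V) \<and> (\<forall>x\<in>V. - x \<in> V)"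

definition maximal_subring :: "'a::comm_ring_1 set \<Rightarrow> bool" where
  "maximal_subring V \<longleftrightarrow> is_subring V \<and> V \<noteq> UNIV \<and>
     (\<forall>W. is_subring W \<and> V \<subseteq> W \<and> W \<noteq> UNIV \<longrightarrow> W = V)"

definition conches :: "'a::comm_ring_1 set \<Rightarrow> 'a \<Rightarrow> bool" where
  "conches V x \<longleftrightarrow> (\<exists>y. x * y = 1 \<and> is_subring V \<and> y \<in> V \<and> x \<notin> V \<and>
     (\<forall>W. is_subring W \<and> V \<subseteq> W \<and> y \<in> W \<and> x \<notin> W \<longrightarrow> W = V))"

definition conch_maximal_subring :: "'a::comm_ring_1 set \<Rightarrow> bool" where
  "conch_maximal_subring V \<longleftrightarrow> maximal_subring V \<and> (\<exists>x. x dvd 1 \<and> conches V x)"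

definition atomic_domain :: "'b::idom itself \<Rightarrow> bool" where
  "atomic_domain _ \<longleftrightarrow> (\<forall>x::'b. x \<noteq> 0 \<and> \<not> x dvd 1 \<longrightarrow>
     (\<exists>xs. (\<forall>z\<in>set xs. irreducible z) \<and> x = prod_list xs))"

definition completely_integrally_closed :: "'b::idom itself \<Rightarrow> bool" where
  "completely_integrally_closed _ \<longleftrightarrow> (\<forall>u::'b fract.
     (\<exists>d::'b. d \<noteq> 0 \<and> (\<forall>n\<ge>1. to_fract d * u ^ n \<in> range to_fract)) \<longrightarrow> u \<in> range to_fract)"

end

theory Submission
  imports Defs "HOL-Algebra.Finite_Extensions"
begin

text \<open>
  Write \<open>D\<close> for the domain, \<open>R\<close> for the extension and \<open>p\<close> for the prime that is invertible in
  \<open>R\<close>. A prime ideal \<open>Q\<close> of \<open>R\<close> maximal with \<open>Q \<inter> D = 0\<close> gives a field \<open>K = Frac(R/Q)\<close>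
  containing \<open>D\<close>. Since \<open>D\<close> is atomic or completely integrally closed, no nonzero element of
  \<open>D\<close> is divisible by all powers of \<open>p\<close>, so the localization \<open>D_(p)\<close> is a discrete valuation
  ring inside \<open>K\<close> with uniformizer \<open>t = p\<close>. By Zorn's lemma it lies in a subring \<open>S\<close> maximal
  among those with uniformizer \<open>t\<close>; by maximality and Gauss's lemma \<open>K\<close> is algebraic over \<open>S\<close>, so every
  \<open>y \<in> K\<close> has some \<open>t\<^sup>k y\<close> integral over \<open>S\<close>. A subring \<open>V \<supseteq> S\<close> maximal among those
  avoiding \<open>1/t\<close> is a valuation ring (Chevalley), hence integrally closed, so \<open>V[1/t] = K\<close>.
  Pulling \<open>V\<close> back to \<open>R\<close> gives a subring \<open>A\<close> with \<open>p \<in> A\<close>, \<open>1/p \<notin> A\<close> and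
  \<open>A[1/p] = R\<close>, and a subring maximal among those containing \<open>A\<close> but not \<open>1/p\<close> is a maximal
  subring conching \<open>1/p\<close>.
\<close>

section \<open>Polynomial expressions over subrings\<close>

text \<open>Coefficient lists are read constant term first, unlike the library's \<open>eval\<close>, so that the
  Horner recursion is structural.\<close>

context cring
begin

fun horner :: "'a list \<Rightarrow> 'a \<Rightarrow> 'a" where
  "horner [] x = \<zero>"
| "horner (c # cs) x = c \<oplus> x \<otimes> horner cs x"

fun coeffs_add :: "'a list \<Rightarrow> 'a list \<Rightarrow> 'a list" where
  "coeffs_add [] bs = bs"
| "coeffs_add (a # as) [] = a # as"
| "coeffs_add (a # as) (b # bs) = (a \<oplus> b) # coeffs_add as bs"

definition coeff_at :: "'a list \<Rightarrow> nat \<Rightarrow> 'a" where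
  "coeff_at cs i = (if i < length cs then cs ! i else \<zero>)"

lemma coeff_at_Cons_0 [simp]: "coeff_at (c # cs) 0 = c"
  and coeff_at_Cons_Suc [simp]: "coeff_at (c # cs) (Suc i) = coeff_at cs i"
  and coeff_at_Nil [simp]: "coeff_at [] i = \<zero>"
  by (simp_all add: coeff_at_def)

lemma coeff_at_in_subring: "subring A R \<Longrightarrow> set cs \<subseteq> A \<Longrightarrow> coeff_at cs i \<in> A"
  by (auto simp: coeff_at_def subringE(2))

lemma coeff_at_zeros: "set cs \<subseteq> {\<zero>} \<Longrightarrow> coeff_at cs i = \<zero>"
  unfolding coeff_at_def using nth_mem by fastforce

lemma coeff_at_monom: "coeff_at (replicate n \<zero> @ c # cs) n = c"
  by (simp add: coeff_at_def nth_append)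

lemma coeff_at_map: "f \<zero> = \<zero> \<Longrightarrow> coeff_at (map f cs) i = f (coeff_at cs i)"
  by (simp add: coeff_at_def)

lemma horner_closed: "set cs \<subseteq> carrier R \<Longrightarrow> x \<in> carrier R \<Longrightarrow> horner cs x \<in> carrier R"
  by (induction cs) auto

lemma horner_zeros: "set cs \<subseteq> {\<zero>} \<Longrightarrow> x \<in> carrier R \<Longrightarrow> horner cs x = \<zero>"
  by (induction cs) auto

lemma length_coeffs_add: "length (coeffs_add as bs) = max (length as) (length bs)"
  by (induction as bs rule: coeffs_add.induct) auto

lemma coeffs_add_in_subring:
  "subring A R \<Longrightarrow> set as \<subseteq> A \<Longrightarrow> set bs \<subseteq> A \<Longrightarrow> set (coeffs_add as bs) \<subseteq> A"
  by (induction as bs rule: coeffs_add.induct) (auto simp: subringE(7))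

lemma horner_coeffs_add:
  "set as \<subseteq> carrier R \<Longrightarrow> set bs \<subseteq> carrier R \<Longrightarrow> x \<in> carrier R \<Longrightarrow>
   horner (coeffs_add as bs) x = horner as x \<oplus> horner bs x"
proof (induction as bs rule: coeffs_add.induct)
  case (3 a as b bs)
  then have "horner as x \<in> carrier R" "horner bs x \<in> carrier R"
    using horner_closed by auto
  with 3 show ?case by simp algebra
qed (auto simp: horner_closed)

lemma coeff_at_coeffs_add:
  "set as \<subseteq> carrier R \<Longrightarrow> set bs \<subseteq> carrier R \<Longrightarrow>
   coeff_at (coeffs_add as bs) i = coeff_at as i \<oplus> coeff_at bs i"
proof (induction as bs arbitrary: i rule: coeffs_add.induct)
  case (1 bs)
  then have "i < length bs \<Longrightarrow> bs ! i \<in> carrier R" by auto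
  then show ?case by (simp add: coeff_at_def)
next
  case (2 a as)
  then have "i < length (a # as) \<Longrightarrow> (a # as) ! i \<in> carrier R" by (meson nth_mem subsetD)
  then show ?case by (simp add: coeff_at_def)
next
  case (3 a as b bs)
  then show ?case by (cases i) auto
qed

lemma horner_scale:
  "c \<in> carrier R \<Longrightarrow> set cs \<subseteq> carrier R \<Longrightarrow> x \<in> carrier R \<Longrightarrow>
   horner (map ((\<otimes>) c) cs) x = c \<otimes> horner cs x"
proof (induction cs)
  case (Cons a cs)
  then have "horner cs x \<in> carrier R" using horner_closed by auto
  with Cons show ?case by simp algebra
qed auto

lemma horner_uminus:
  "set cs \<subseteq> carrier R \<Longrightarrow> x \<in> carrier R \<Longrightarrow> horner (map (\<lambda>c. \<ominus> c) cs) x = \<ominus> horner cs x"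
proof (induction cs)
  case (Cons a cs)
  then have "horner cs x \<in> carrier R" using horner_closed by auto
  with Cons show ?case by simp algebra
qed auto

lemma horner_append:
  "set as \<subseteq> carrier R \<Longrightarrow> set bs \<subseteq> carrier R \<Longrightarrow> x \<in> carrier R \<Longrightarrow>
   horner (as @ bs) x = horner as x \<oplus> x [^] length as \<otimes> horner bs x"
proof (induction as)
  case Nil
  then show ?case using horner_closed by simp
next
  case (Cons a as)
  then have "a \<in> carrier R" "horner as x \<in> carrier R" "horner bs x \<in> carrier R"
    using horner_closed by auto
  then have "a \<oplus> x \<otimes> (horner as x \<oplus> P \<otimes> horner bs x)
      = a \<oplus> x \<otimes> horner as x \<oplus> P \<otimes> x \<otimes> horner bs x" if "P \<in> carrier R" for P
    using that Cons.prems by algebra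
  with Cons show ?case by (simp add: nat_pow_Suc2)
qed

lemma horner_monom:
  assumes "c \<in> carrier R" "x \<in> carrier R"
  shows "horner (replicate n \<zero> @ [c]) x = x [^] n \<otimes> c"
proof -
  have "set (replicate n \<zero>) \<subseteq> {\<zero>}" by auto
  then show ?thesis
    using horner_append[of "replicate n \<zero>" "[c]" x] horner_zeros[of "replicate n \<zero>" x] assms
    by auto
qed

lemma simple_extension_eq_horner:
  assumes "K \<subseteq> carrier R" "x \<in> carrier R"
  shows "simple_extension K x = {horner cs x | cs. set cs \<subseteq> K}"
proof (intro equalityI subsetI)
  fix a assume "a \<in> simple_extension K x"
  then show "a \<in> {horner cs x | cs. set cs \<subseteq> K}"
  proof (induction rule: simple_extension.induct)
    case zero
    show ?case by (auto intro: exI[of _ "[]"])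
  next
    case (lin k1 k2)
    then obtain cs where cs: "set cs \<subseteq> K" "k1 = horner cs x" by blast
    moreover have "horner cs x \<in> carrier R" "k2 \<in> carrier R"
      using cs(1) lin(2) assms horner_closed[of cs x] by auto
    ultimately have "k1 \<otimes> x \<oplus> k2 = horner (k2 # cs) x"
      using assms(2) by (simp add: m_comm a_comm)
    with cs lin(2) show ?case by (auto intro!: exI[of _ "k2 # cs"])
  qed
next
  fix a assume "a \<in> {horner cs x | cs. set cs \<subseteq> K}"
  then obtain cs where "set cs \<subseteq> K" "a = horner cs x" by blast
  then show "a \<in> simple_extension K x"
  proof (induction cs arbitrary: a)
    case (Cons c cs)
    then have "horner cs x \<in> simple_extension K x" "horner cs x \<in> carrier R"
      using assms horner_closed[of cs x] by auto
    moreover have "a = horner cs x \<otimes> x \<oplus> c"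
      using Cons.prems assms calculation(2) by (auto simp: m_comm a_comm)
    ultimately show ?case using simple_extension.lin Cons.prems by auto
  qed simp
qed

lemma subring_nat_pow_closed: "subring A R \<Longrightarrow> a \<in> A \<Longrightarrow> a [^] (n::nat) \<in> A"
  by (induction n) (auto simp: subringE(3,6))

lemma subring_chain_Union:
  assumes "C \<noteq> {}" "\<And>A. A \<in> C \<Longrightarrow> subring A R" "subset.chain C C"
  shows "subring (\<Union>C) R"
proof (rule subringI)
  have pair: "\<exists>A\<in>C. a \<in> A \<and> b \<in> A" if "a \<in> \<Union>C" "b \<in> \<Union>C" for a b
    using that assms(3) unfolding subset_chain_def by blast
  show "\<Union>C \<subseteq> carrier R" using assms(2)[THEN subringE(1)] by blast
  show "\<one> \<in> \<Union>C" using assms(1) assms(2)[THEN subringE(3)] by blast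
  show "\<ominus> a \<in> \<Union>C" if "a \<in> \<Union>C" for a using that assms(2)[THEN subringE(5)] by blast
  show "a \<otimes> b \<in> \<Union>C" if "a \<in> \<Union>C" "b \<in> \<Union>C" for a b
    using pair[OF that] assms(2)[THEN subringE(6)] by blast
  show "a \<oplus> b \<in> \<Union>C" if "a \<in> \<Union>C" "b \<in> \<Union>C" for a b
    using pair[OF that] assms(2)[THEN subringE(7)] by blast
qed

lemma pow_mult_horner_inverse_in_subring:
  assumes V: "subring V R" and a: "a \<in> V" and b: "b \<in> carrier R" and ab: "a \<otimes> b = \<one>"
  shows "set cs \<subseteq> V \<Longrightarrow> length cs \<le> Suc m \<Longrightarrow> a [^] m \<otimes> horner cs b \<in> V"
proof (induction cs arbitrary: m)
  case Nil
  then show ?case using subringE(1,2)[OF V] a by auto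
next
  case (Cons c cs)
  have ac: "a \<in> carrier R" and cc: "c \<in> carrier R" and hc: "horner cs b \<in> carrier R"
    using Cons.prems a b subringE(1)[OF V] horner_closed[of cs b] by auto
  show ?case
  proof (cases m)
    case 0
    with Cons.prems show ?thesis using cc b by simp
  next
    case (Suc m')
    have "a [^] m \<otimes> horner (c # cs) b = a [^] m \<otimes> c \<oplus> a [^] m' \<otimes> (a \<otimes> b) \<otimes> horner cs b"
    proof -
      have "P \<otimes> a \<otimes> (c \<oplus> b \<otimes> horner cs b) = P \<otimes> a \<otimes> c \<oplus> P \<otimes> (a \<otimes> b) \<otimes> horner cs b"
        if "P \<in> carrier R" for P
        using that ac b cc hc by algebra
      then show ?thesis using Suc ac by simp
    qed
    moreover have "a [^] m' \<otimes> horner cs b \<in> V" using Cons Suc by simp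
    moreover have "a [^] m \<otimes> c \<in> V"
      using subring_nat_pow_closed[OF V a] Cons.prems subringE(6)[OF V] by simp
    ultimately show ?thesis using ab ac hc subringE(7)[OF V] by simp
  qed
qed

lemma pow_one_minus_mult_in_subring:
  assumes V: "subring V R" and t: "t \<in> V" and v: "v \<in> V"
  shows "\<exists>g\<in>V. (\<one> \<ominus> t \<otimes> v) [^] (n::nat) = \<one> \<ominus> t \<otimes> g"
proof (induction n)
  case 0
  have "t \<in> carrier R" using subringE(1)[OF V] t by blast
  then have "(\<one> \<ominus> t \<otimes> v) [^] (0::nat) = \<one> \<ominus> t \<otimes> \<zero>" by (simp add: minus_eq)
  then show ?case using subringE(2)[OF V] by blast
next
  case (Suc n)
  then obtain g where g: "g \<in> V" "(\<one> \<ominus> t \<otimes> v) [^] n = \<one> \<ominus> t \<otimes> g" by blast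
  have c: "t \<in> carrier R" "v \<in> carrier R" "g \<in> carrier R" using V t v g subringE(1) by auto
  have "(\<one> \<ominus> t \<otimes> v) [^] Suc n = (\<one> \<ominus> t \<otimes> g) \<otimes> (\<one> \<ominus> t \<otimes> v)"
    using g(2) by simp
  also have "\<dots> = \<one> \<ominus> t \<otimes> (g \<oplus> v \<ominus> t \<otimes> g \<otimes> v)"
    using c by algebra
  finally have "(\<one> \<ominus> t \<otimes> v) [^] Suc n = \<one> \<ominus> t \<otimes> (g \<oplus> v \<ominus> t \<otimes> g \<otimes> v)" .
  moreover have "g \<oplus> v \<ominus> t \<otimes> g \<otimes> v \<in> V"
    using g(1) t v subringE(5,6,7)[OF V] by (simp add: minus_eq)
  ultimately show ?case by blast
qed

lemma horner_inverse_reverse: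
  assumes V: "subring V R" and z: "z \<in> carrier R" and w: "w \<in> carrier R" and zw: "z \<otimes> w = \<one>"
  shows "set es \<subseteq> V \<Longrightarrow> length es \<le> k \<Longrightarrow>
    \<exists>es'. set es' \<subseteq> V \<and> length es' \<le> k \<and> z [^] k \<otimes> w \<otimes> horner es w = horner es' z"
proof (induction es arbitrary: k)
  case Nil
  then show ?case using z w by (intro exI[of _ "[]"]) simp
next
  case (Cons e es)
  then obtain k' where k: "k = Suc k'" by (cases k) auto
  have eV: "e \<in> V" "set es \<subseteq> V" using Cons.prems by auto
  have ec: "e \<in> carrier R" and hc: "horner es w \<in> carrier R"
    using eV subringE(1)[OF V] horner_closed[of es w] w by auto
  obtain es2 where es2: "set es2 \<subseteq> V" "length es2 \<le> k'" "z [^] k' \<otimes> w \<otimes> horner es w = horner es2 z"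
    using Cons.IH[OF eV(2), of k'] Cons.prems k by auto
  have mon: "set (replicate k' \<zero> @ [e]) \<subseteq> V" using eV subringE(2)[OF V] by auto
  then have monc: "set (replicate k' \<zero> @ [e]) \<subseteq> carrier R" using subringE(1)[OF V] by blast
  have "z [^] k \<otimes> w \<otimes> horner (e # es) w = z [^] k' \<otimes> (z \<otimes> w) \<otimes> e \<oplus> z [^] k' \<otimes> (z \<otimes> w) \<otimes> w \<otimes> horner es w"
  proof -
    have "P \<otimes> z \<otimes> w \<otimes> (e \<oplus> w \<otimes> horner es w) = P \<otimes> (z \<otimes> w) \<otimes> e \<oplus> P \<otimes> (z \<otimes> w) \<otimes> w \<otimes> horner es w"
      if "P \<in> carrier R" for P
      using that z w ec hc by algebra
    then show ?thesis using k z by simp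
  qed
  also have "\<dots> = horner (replicate k' \<zero> @ [e]) z \<oplus> horner es2 z"
    using es2(3) horner_monom[OF ec z] zw z by simp
  also have "\<dots> = horner (coeffs_add (replicate k' \<zero> @ [e]) es2) z"
    using horner_coeffs_add[OF monc _ z, of es2] es2(1) subringE(1)[OF V] by auto
  finally show ?case
    using coeffs_add_in_subring[OF V mon es2(1)] es2(2) k
    by (intro exI[of _ "coeffs_add (replicate k' \<zero> @ [e]) es2"]) (simp add: length_coeffs_add)
qed

definition horner_transcendental :: "'a set \<Rightarrow> 'a \<Rightarrow> bool" where
  "horner_transcendental S y \<longleftrightarrow> (\<forall>cs. set cs \<subseteq> S \<and> horner cs y = \<zero> \<longrightarrow> set cs \<subseteq> {\<zero>})"

lemma horner_transcendental_coeff_eq: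
  assumes S: "subring S R" and y: "y \<in> carrier R" and tr: "horner_transcendental S y"
    and cs: "set cs \<subseteq> S" and ds: "set ds \<subseteq> S" and eq: "horner cs y = horner ds y"
  shows "coeff_at cs i = coeff_at ds i"
proof -
  have SC: "S \<subseteq> carrier R" using subringE(1)[OF S] .
  define es where "es = coeffs_add cs (map (\<lambda>c. \<ominus> c) ds)"
  have mds: "set (map (\<lambda>c. \<ominus> c) ds) \<subseteq> S" using ds subringE(5)[OF S] by auto
  have "horner es y = horner cs y \<oplus> \<ominus> horner ds y"
    unfolding es_def using horner_coeffs_add horner_uminus[of ds y] cs mds ds SC y by auto
  also have "\<dots> = \<zero>" using eq horner_closed[of ds y] ds SC y by (simp add: r_neg)
  finally have "set es \<subseteq> {\<zero>}"
    using tr coeffs_add_in_subring[OF S cs mds] unfolding es_def horner_transcendental_def by blast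
  then have "coeff_at cs i \<oplus> \<ominus> coeff_at ds i = \<zero>"
    using coeff_at_zeros[of es i] coeff_at_coeffs_add[of cs _ i] coeff_at_map[of "\<lambda>c. \<ominus> c" ds i] cs mds SC
    unfolding es_def by auto
  then show ?thesis
    using coeff_at_in_subring[OF S cs, of i] coeff_at_in_subring[OF S ds, of i] SC
    by (metis add.inv_closed add.inv_inv minus_equality subsetD)
qed

lemma horner_transcendental_coeff_mult:
  assumes S: "subring S R" and y: "y \<in> carrier R" and tr: "horner_transcendental S y" and c: "c \<in> S"
    and cs: "set cs \<subseteq> S" and ds: "set ds \<subseteq> S" and eq: "horner cs y = c \<otimes> horner ds y"
  shows "coeff_at cs i = c \<otimes> coeff_at ds i"
proof -
  have SC: "S \<subseteq> carrier R" using subringE(1)[OF S] .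
  have m: "set (map ((\<otimes>) c) ds) \<subseteq> S" using ds c subringE(6)[OF S] by auto
  have "c \<in> carrier R" "set ds \<subseteq> carrier R" using c ds SC by auto
  then have "horner cs y = horner (map ((\<otimes>) c) ds) y" using eq horner_scale[of c ds y] y by simp
  then have "coeff_at cs i = coeff_at (map ((\<otimes>) c) ds) i"
    using horner_transcendental_coeff_eq[OF S y tr cs m] by simp
  also have "\<dots> = c \<otimes> coeff_at ds i" using coeff_at_map[of "(\<otimes>) c" ds i] c SC by auto
  finally show ?thesis .
qed

lemma horner_in_simple_extension:
  "K \<subseteq> carrier R \<Longrightarrow> x \<in> carrier R \<Longrightarrow> set cs \<subseteq> K \<Longrightarrow> horner cs x \<in> simple_extension K x"
  using simple_extension_eq_horner by blast

lemma horner_coeffs_multiples: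
  assumes S: "subring S R" and t: "t \<in> carrier R" and y: "y \<in> carrier R"
  shows "set cs \<subseteq> S \<Longrightarrow> \<forall>i. \<exists>c\<in>S. coeff_at cs i = t \<otimes> c \<Longrightarrow>
    \<exists>bs. set bs \<subseteq> S \<and> horner cs y = t \<otimes> horner bs y"
proof (induction cs)
  case Nil
  then show ?case using t by (intro exI[of _ "[]"]) simp
next
  case (Cons c cs)
  obtain a where a: "a \<in> S" "c = t \<otimes> a" using Cons.prems(2) coeff_at_Cons_0 by metis
  have "\<forall>i. \<exists>c\<in>S. coeff_at cs i = t \<otimes> c" using Cons.prems(2) coeff_at_Cons_Suc by metis
  then obtain bs where bs: "set bs \<subseteq> S" "horner cs y = t \<otimes> horner bs y" using Cons by auto
  have "a \<in> carrier R" "horner bs y \<in> carrier R"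
    using a(1) bs(1) subringE(1)[OF S] horner_closed y by auto
  then have "horner (c # cs) y = t \<otimes> horner (a # bs) y" using a(2) bs(2) t y by simp algebra
  then show ?case using a(1) bs(1) by (intro exI[of _ "a # bs"]) auto
qed

lemma subring_split_form_mult:
  assumes P: "subring P R" and t: "t \<in> P" and y: "y \<in> P"
    and A: "A0 \<in> P" "A1 \<in> P" and B: "B0 \<in> P" "B1 \<in> P" and uv: "u \<in> P" "v \<in> P"
  shows "\<exists>E\<in>P. \<exists>C\<in>P.
    (t \<otimes> A0 \<oplus> y [^] (k::nat) \<otimes> (u \<oplus> y \<otimes> A1)) \<otimes> (t \<otimes> B0 \<oplus> y [^] (l::nat) \<otimes> (v \<oplus> y \<otimes> B1))
    = t \<otimes> E \<oplus> y [^] (k + l) \<otimes> (u \<otimes> v \<oplus> y \<otimes> C)"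
proof -
  note closed = subringE(6,7)[OF P] subring_nat_pow_closed[OF P y]
  have c: "t \<in> carrier R" "y \<in> carrier R" "A0 \<in> carrier R" "A1 \<in> carrier R" "B0 \<in> carrier R"
    "B1 \<in> carrier R" "u \<in> carrier R" "v \<in> carrier R"
    using assms subringE(1)[OF P] by auto
  define b where "b = t \<otimes> B0 \<oplus> y [^] l \<otimes> (v \<oplus> y \<otimes> B1)"
  define E where "E = A0 \<otimes> b \<oplus> y [^] k \<otimes> (u \<oplus> y \<otimes> A1) \<otimes> B0"
  define C where "C = u \<otimes> B1 \<oplus> A1 \<otimes> v \<oplus> y \<otimes> A1 \<otimes> B1"
  have "E \<in> P" "C \<in> P" unfolding E_def C_def b_def using assms by (auto intro!: closed)
  moreover have "(t \<otimes> A0 \<oplus> Yk \<otimes> U) \<otimes> (t \<otimes> B0 \<oplus> Yl \<otimes> V)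
      = t \<otimes> (A0 \<otimes> (t \<otimes> B0 \<oplus> Yl \<otimes> V) \<oplus> Yk \<otimes> U \<otimes> B0) \<oplus> (Yk \<otimes> Yl) \<otimes> (U \<otimes> V)"
    if "Yk \<in> carrier R" "Yl \<in> carrier R" "U \<in> carrier R" "V \<in> carrier R" for Yk Yl U V
    using that c by algebra
  moreover have "(u \<oplus> y \<otimes> A1) \<otimes> (v \<oplus> y \<otimes> B1) = u \<otimes> v \<oplus> y \<otimes> C"
    unfolding C_def using c by algebra
  ultimately show ?thesis unfolding E_def b_def using c by (auto simp: nat_pow_mult)
qed

lemma pow_mult_horner_scale:
  assumes S: "subring S R" and t: "t \<in> S" and y: "y \<in> carrier R"
  shows "set cs \<subseteq> S \<Longrightarrow> length cs \<le> Suc m \<Longrightarrow>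
    \<exists>es. set es \<subseteq> S \<and> length es \<le> length cs \<and> t [^] (k * m) \<otimes> horner cs y = horner es (t [^] k \<otimes> y)"
proof (induction cs arbitrary: m)
  case Nil
  have "t \<in> carrier R" using subringE(1)[OF S] t by blast
  then show ?case by (intro exI[of _ "[]"]) simp
next
  case (Cons c cs)
  have cS: "c \<in> S" "set cs \<subseteq> S" using Cons.prems by auto
  have tc: "t \<in> carrier R" and cc: "c \<in> carrier R" and hc: "horner cs y \<in> carrier R"
    using subringE(1)[OF S] t cS horner_closed[of cs y] y by auto
  show ?case
  proof (cases m)
    case 0
    with Cons.prems cc y tc show ?thesis by (intro exI[of _ "[c]"]) simp
  next
    case (Suc m')
    obtain es where es: "set es \<subseteq> S" "length es \<le> length cs"
        "t [^] (k * m') \<otimes> horner cs y = horner es (t [^] k \<otimes> y)"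
      using Cons.IH[OF cS(2), of m'] Cons.prems Suc by auto
    have "t [^] (k * m) \<otimes> horner (c # cs) y
        = t [^] (k * m) \<otimes> c \<oplus> (t [^] k \<otimes> y) \<otimes> (t [^] (k * m') \<otimes> horner cs y)"
    proof -
      have "(P \<otimes> Q) \<otimes> (c \<oplus> y \<otimes> horner cs y) = (P \<otimes> Q) \<otimes> c \<oplus> (P \<otimes> y) \<otimes> (Q \<otimes> horner cs y)"
        if "P \<in> carrier R" "Q \<in> carrier R" for P Q
        using that cc y hc by algebra
      moreover have "t [^] (k * m) = t [^] k \<otimes> t [^] (k * m')" using Suc tc by (simp add: nat_pow_mult)
      ultimately show ?thesis using tc by simp
    qed
    also have "\<dots> = horner ((t [^] (k * m) \<otimes> c) # es) (t [^] k \<otimes> y)" using es(3) by simp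
    finally show ?thesis
      using es subring_nat_pow_closed[OF S t] cS subringE(6)[OF S]
      by (intro exI[of _ "(t [^] (k * m) \<otimes> c) # es"]) auto
  qed
qed

lemma nat_pow_scaled_Suc:
  assumes t: "t \<in> carrier R" and y: "y \<in> carrier R"
  shows "(t [^] (k::nat) \<otimes> y) [^] Suc m = t [^] (k * m) \<otimes> t [^] k \<otimes> y [^] Suc m"
proof -
  have "(t [^] k \<otimes> y) [^] Suc m = (t [^] k) [^] Suc m \<otimes> y [^] Suc m"
    by (rule nat_pow_distrib) (use t y in auto)
  also have "(t [^] k) [^] Suc m = t [^] (k * m + k)"
    using nat_pow_pow[OF t, of k "Suc m"] by (simp add: add.commute)
  also have "\<dots> = t [^] (k * m) \<otimes> t [^] k" by (rule nat_pow_mult[OF t, symmetric])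
  finally show ?thesis .
qed

text \<open>Multiplying the relation by \<open>v \<otimes> t [^] (k * m)\<close> makes it monic in \<open>t [^] k \<otimes> y\<close>.\<close>

lemma horner_relation_integral:
  assumes S: "subring S R" and t: "t \<in> S" and y: "y \<in> carrier R"
    and cs: "set cs \<subseteq> S" "length cs = Suc m" and u: "u \<in> carrier R" "v \<in> S" "v \<otimes> u = \<one>"
    and rel: "horner cs y \<oplus> y [^] length cs \<otimes> (t [^] (k::nat) \<otimes> u) = \<zero>"
  shows "\<exists>es. set es \<subseteq> S \<and> length es \<le> length cs \<and>
    (t [^] k \<otimes> y) [^] length cs = horner es (t [^] k \<otimes> y)"
proof -
  have tc: "t \<in> carrier R" and vc: "v \<in> carrier R" and hc: "horner cs y \<in> carrier R"
    using S t u(2) cs(1) y subringE(1) horner_closed[of cs y] by auto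
  define z where "z = t [^] k \<otimes> y"
  obtain es where es: "set es \<subseteq> S" "length es \<le> length cs" "t [^] (k * m) \<otimes> horner cs y = horner es z"
    using pow_mult_horner_scale[OF S t y cs(1), of m k] cs(2) unfolding z_def by auto
  have esc: "horner es z \<in> carrier R"
    using horner_closed es(1) subringE(1)[OF S] tc y unfolding z_def by blast
  have zpow: "z [^] length cs = t [^] (k * m) \<otimes> t [^] k \<otimes> y [^] length cs"
    unfolding z_def cs(2) using nat_pow_scaled_Suc[OF tc y] .
  have "\<zero> = v \<otimes> t [^] (k * m) \<otimes> (horner cs y \<oplus> y [^] length cs \<otimes> (t [^] k \<otimes> u))"
    using rel vc tc by simp
  also have "\<dots> = v \<otimes> (t [^] (k * m) \<otimes> horner cs y) \<oplus> (t [^] (k * m) \<otimes> t [^] k \<otimes> y [^] length cs) \<otimes> (v \<otimes> u)"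
  proof -
    have "v \<otimes> T \<otimes> (h \<oplus> Y \<otimes> (P \<otimes> u)) = v \<otimes> (T \<otimes> h) \<oplus> (T \<otimes> P \<otimes> Y) \<otimes> (v \<otimes> u)"
      if "T \<in> carrier R" "h \<in> carrier R" "Y \<in> carrier R" "P \<in> carrier R" for T h Y P
      using that u(1) vc by algebra
    then show ?thesis using tc hc y by simp
  qed
  also have "\<dots> = v \<otimes> horner es z \<oplus> z [^] length cs"
    using es(3) zpow u(3) tc y by simp
  finally have "z [^] length cs = \<ominus> (v \<otimes> horner es z)"
    using minus_equality[of "z [^] length cs" "v \<otimes> horner es z"] vc esc tc y
    unfolding z_def by (simp add: a_comm)
  also have "\<dots> = horner (map ((\<otimes>) (\<ominus> v)) es) z"
    using horner_scale[of "\<ominus> v" es z] vc es(1) subringE(1)[OF S] tc y esc unfolding z_def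
    by (auto simp: l_minus)
  finally have "z [^] length cs = horner (map ((\<otimes>) (\<ominus> v)) es) z" .
  moreover have "set (map ((\<otimes>) (\<ominus> v)) es) \<subseteq> S"
    using es(1) u(2) subringE(5,6)[OF S] by auto
  ultimately show ?thesis using es(2) unfolding z_def by (metis length_map)
qed

end


section \<open>Conch subrings of a field\<close>

context field
begin

lemma nonzero_inv_closed: "x \<in> carrier R \<Longrightarrow> x \<noteq> \<zero> \<Longrightarrow> inv x \<in> carrier R"
  and nonzero_r_inv: "x \<in> carrier R \<Longrightarrow> x \<noteq> \<zero> \<Longrightarrow> x \<otimes> inv x = \<one>"
  and nonzero_l_inv: "x \<in> carrier R \<Longrightarrow> x \<noteq> \<zero> \<Longrightarrow> inv x \<otimes> x = \<one>"
  and nonzero_inv_inv: "x \<in> carrier R \<Longrightarrow> x \<noteq> \<zero> \<Longrightarrow> inv (inv x) = x"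
  by (simp_all add: field_Units)

lemma nonzero_pow_nonzero: "x \<in> carrier R \<Longrightarrow> x \<noteq> \<zero> \<Longrightarrow> x [^] (n::nat) \<noteq> \<zero>"
  by (induction n) (auto simp: integral_iff)

lemma nonzero_inv_nonzero: "x \<in> carrier R \<Longrightarrow> x \<noteq> \<zero> \<Longrightarrow> inv x \<noteq> \<zero>"
  using nonzero_r_inv by fastforce

lemma nonzero_inv_mult:
  assumes "x \<in> carrier R" "x \<noteq> \<zero>" "y \<in> carrier R" "y \<noteq> \<zero>"
  shows "inv (x \<otimes> y) = inv x \<otimes> inv y"
proof (rule comm_inv_char)
  show "x \<otimes> y \<otimes> (inv x \<otimes> inv y) = \<one>"
    using assms nonzero_inv_closed nonzero_r_inv by (simp add: m_ac)
qed (use assms nonzero_inv_closed in auto)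

text \<open>\<open>conch_subring V t\<close> says that \<open>V\<close> conches the unit \<open>inv t\<close>.\<close>

definition conch_subring :: "'a set \<Rightarrow> 'a \<Rightarrow> bool" where
  "conch_subring V t \<longleftrightarrow> subring V R \<and> t \<in> V \<and> t \<noteq> \<zero> \<and> inv t \<notin> V \<and>
     (\<forall>W. subring W R \<and> V \<subseteq> W \<and> inv t \<notin> W \<longrightarrow> W = V)"

lemma conch_subringD:
  assumes "conch_subring V t"
  shows "subring V R" "t \<in> V" "t \<noteq> \<zero>" "inv t \<notin> V" "t \<in> carrier R" "V \<subseteq> carrier R"
  using assms subringE(1) unfolding conch_subring_def by auto

lemma conch_subring_relation:
  assumes c: "conch_subring V t" and y: "y \<in> carrier R" "y \<notin> V"
  shows "\<exists>cs. set cs \<subseteq> V \<and> \<one> = t \<otimes> horner cs y"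
proof -
  note V = conch_subringD[OF c]
  have "inv t \<in> simple_extension V y"
  proof (rule ccontr)
    assume "inv t \<notin> simple_extension V y"
    then have "simple_extension V y = V"
      using c simple_extension_is_subring[OF V(1) y(1)] simple_extension_incl[OF V(6) y(1)]
      unfolding conch_subring_def by blast
    then show False using simple_extension_mem[OF V(1) y(1)] y(2) by blast
  qed
  then obtain cs where "set cs \<subseteq> V" "inv t = horner cs y"
    using simple_extension_eq_horner[OF V(6) y(1)] by blast
  then show ?thesis using nonzero_r_inv[OF V(5,3)] by metis
qed

lemma conch_subring_one_minus_nonzero:
  assumes c: "conch_subring V t" and v: "v \<in> V"
  shows "\<one> \<ominus> t \<otimes> v \<noteq> \<zero>"
proof
  note V = conch_subringD[OF c]
  assume "\<one> \<ominus> t \<otimes> v = \<zero>"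
  moreover have vc: "v \<in> carrier R" using V(6) v by blast
  moreover have "\<one> = (\<one> \<ominus> t \<otimes> v) \<oplus> t \<otimes> v" using V(5) vc by algebra
  ultimately have "t \<otimes> v = \<one>" using V(5) vc by simp
  then have "inv t = v" using comm_inv_char[OF V(5) vc] by simp
  then show False using V(4) v by simp
qed

text \<open>\<open>t\<close> lies in the Jacobson radical of \<open>V\<close>: if \<open>inv (\<one> \<ominus> t \<otimes> v)\<close> were not in \<open>V\<close>,
  a relation for it, cleared of denominators by a power of \<open>\<one> \<ominus> t \<otimes> v\<close>, would exhibit
  \<open>inv t\<close> as an element of \<open>V\<close>.\<close>

lemma conch_subring_one_minus_inv:
  assumes c: "conch_subring V t" and v: "v \<in> V"
  shows "inv (\<one> \<ominus> t \<otimes> v) \<in> V"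
proof (rule ccontr)
  note V = conch_subringD[OF c]
  define u where "u = \<one> \<ominus> t \<otimes> v"
  have uV: "u \<in> V" unfolding u_def
    using V(1,2) v subringE(3,5,6,7)[OF V(1)] by (simp add: minus_eq)
  have uc: "u \<in> carrier R" and u0: "u \<noteq> \<zero>"
    using uV V(6) conch_subring_one_minus_nonzero[OF c v] unfolding u_def by auto
  have iuc: "inv u \<in> carrier R" using nonzero_inv_closed[OF uc u0] .
  assume "inv (\<one> \<ominus> t \<otimes> v) \<notin> V"
  then obtain cs where cs: "set cs \<subseteq> V" "\<one> = t \<otimes> horner cs (inv u)"
    using conch_subring_relation[OF c iuc] unfolding u_def by blast
  have hc: "horner cs (inv u) \<in> carrier R" using horner_closed cs(1) V(6) iuc by blast
  define e where "e = u [^] length cs \<otimes> horner cs (inv u)"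
  have eV: "e \<in> V"
    unfolding e_def
    using pow_mult_horner_inverse_in_subring[OF V(1) uV iuc nonzero_r_inv[OF uc u0] cs(1)] by simp
  obtain g where g: "g \<in> V" "u [^] length cs = \<one> \<ominus> t \<otimes> g"
    using pow_one_minus_mult_in_subring[OF V(1,2) v] unfolding u_def by blast
  have ec: "e \<in> carrier R" and gc: "g \<in> carrier R" using eV g(1) V(6) by auto
  have "\<one> \<ominus> t \<otimes> g = u [^] length cs \<otimes> (t \<otimes> horner cs (inv u))"
    using g(2) cs(2)[symmetric] uc V(5) gc by simp
  also have "\<dots> = t \<otimes> e" unfolding e_def using uc V(5) hc by (simp add: m_lcomm)
  finally have eq: "\<one> \<ominus> t \<otimes> g = t \<otimes> e" .
  have "\<one> = (\<one> \<ominus> t \<otimes> g) \<oplus> t \<otimes> g" using V(5) gc by algebra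
  then have "t \<otimes> (e \<oplus> g) = \<one>" using eq V(5) ec gc by (simp add: r_distr)
  then have "inv t = e \<oplus> g" using comm_inv_char[OF V(5)] ec gc by simp
  then show False using V(4) eV g(1) subringE(7)[OF V(1)] by simp
qed

lemma conch_subring_relation_divide_constant:
  assumes c: "conch_subring V t" and w: "w \<in> carrier R"
    and ds: "set ds \<subseteq> V" "\<one> = t \<otimes> horner ds w"
  shows "\<exists>ds'. set ds' \<subseteq> V \<and> length ds' < length ds \<and> \<one> = t \<otimes> w \<otimes> horner ds' w"
proof -
  note V = conch_subringD[OF c]
  obtain d ds0 where dd: "ds = d # ds0" using ds(2) V(5) by (cases ds) auto
  have dV: "d \<in> V" "set ds0 \<subseteq> V" using ds(1) dd by auto
  have dc: "d \<in> carrier R" and hc: "horner ds0 w \<in> carrier R"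
    using dV V(6) horner_closed[of ds0 w] w by auto
  define u where "u = \<one> \<ominus> t \<otimes> d"
  have u0: "u \<noteq> \<zero>" and iuV: "inv u \<in> V"
    using conch_subring_one_minus_nonzero[OF c dV(1)] conch_subring_one_minus_inv[OF c dV(1)]
    unfolding u_def by auto
  have uc: "u \<in> carrier R" unfolding u_def using V(5) dc by simp
  have iuc: "inv u \<in> carrier R" using nonzero_inv_closed[OF uc u0] .
  have "u = t \<otimes> (d \<oplus> w \<otimes> horner ds0 w) \<ominus> t \<otimes> d" unfolding u_def using ds(2) dd by simp
  also have "\<dots> = t \<otimes> w \<otimes> horner ds0 w" using V(5) dc w hc by algebra
  finally have ueq: "u = t \<otimes> w \<otimes> horner ds0 w" .
  have "\<one> = inv u \<otimes> u" using nonzero_l_inv[OF uc u0] by simp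
  also have "\<dots> = t \<otimes> w \<otimes> (inv u \<otimes> horner ds0 w)" using ueq iuc V(5) w hc by (simp add: m_lcomm)
  also have "\<dots> = t \<otimes> w \<otimes> horner (map ((\<otimes>) (inv u)) ds0) w"
    using horner_scale[OF iuc _ w, of ds0] dV(2) V(6) by auto
  finally show ?thesis
    using dV(2) iuV subringE(6)[OF V(1)] dd by (intro exI[of _ "map ((\<otimes>) (inv u)) ds0"]) auto
qed

lemma conch_subring_relation_shorten:
  assumes c: "conch_subring V t" and z: "z \<in> carrier R" and w: "w \<in> carrier R" and zw: "z \<otimes> w = \<one>"
    and cs: "set cs \<subseteq> V" "\<one> = t \<otimes> horner cs z"
    and ds: "set ds \<subseteq> V" "length ds \<le> length cs" "\<one> = t \<otimes> horner ds w"
  shows "\<exists>fs. set fs \<subseteq> V \<and> length fs < length cs \<and> \<one> = t \<otimes> horner fs z"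
proof -
  note V = conch_subringD[OF c]
  obtain ds' where ds': "set ds' \<subseteq> V" "length ds' < length ds" "\<one> = t \<otimes> w \<otimes> horner ds' w"
    using conch_subring_relation_divide_constant[OF c w ds(1,3)] by blast
  obtain cs0 cl where csd: "cs = cs0 @ [cl]"
    using ds(2) ds'(2) by (metis append_butlast_last_id less_nat_zero_code list.size(3) order_less_le_trans)
  define m where "m = length cs0"
  have cs0V: "set cs0 \<subseteq> V" "cl \<in> V" using cs(1) csd by auto
  have clc: "cl \<in> carrier R" and h0c: "horner cs0 z \<in> carrier R" and h2c: "horner ds' w \<in> carrier R"
    using cs0V ds'(1) V(6) horner_closed z w by auto
  obtain es where es: "set es \<subseteq> V" "length es \<le> m" "z [^] m \<otimes> w \<otimes> horner ds' w = horner es z"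
    using horner_inverse_reverse[OF V(1) z w zw ds'(1), of m] ds(2) ds'(2) csd m_def by auto
  have esc: "set es \<subseteq> carrier R" using es(1) V(6) by auto
  have "z [^] m \<otimes> cl = z [^] m \<otimes> cl \<otimes> (t \<otimes> w \<otimes> horner ds' w)"
    using ds'(3)[symmetric] z clc by simp
  also have "\<dots> = (cl \<otimes> t) \<otimes> (z [^] m \<otimes> w \<otimes> horner ds' w)"
  proof -
    have "P \<otimes> cl \<otimes> (t \<otimes> w \<otimes> horner ds' w) = (cl \<otimes> t) \<otimes> (P \<otimes> w \<otimes> horner ds' w)"
      if "P \<in> carrier R" for P
      using that clc V(5) w h2c by algebra
    then show ?thesis using z by simp
  qed
  also have "\<dots> = horner (map ((\<otimes>) (cl \<otimes> t)) es) z"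
    using es(3) horner_scale[of "cl \<otimes> t" es z] clc V(5) esc z by simp
  finally have top: "z [^] m \<otimes> cl = horner (map ((\<otimes>) (cl \<otimes> t)) es) z" .
  define fs where "fs = coeffs_add cs0 (map ((\<otimes>) (cl \<otimes> t)) es)"
  have mV: "set (map ((\<otimes>) (cl \<otimes> t)) es) \<subseteq> V"
    using es(1) cs0V(2) V(2) subringE(6)[OF V(1)] by auto
  have "horner cs z = horner cs0 z \<oplus> z [^] m \<otimes> cl"
    using horner_append[of cs0 "[cl]" z] csd cs0V V(6) z clc m_def by auto
  also have "\<dots> = horner fs z"
    unfolding fs_def top using horner_coeffs_add[of cs0 _ z] cs0V mV V(6) z by auto
  finally show ?thesis
    using cs(2) coeffs_add_in_subring[OF V(1) cs0V(1) mV] es(2) csd m_def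
    by (intro exI[of _ fs]) (auto simp: fs_def length_coeffs_add)
qed

text \<open>Chevalley's argument: if neither \<open>z\<close> nor \<open>inv z\<close> lay in \<open>V\<close>, maximality would give
  relations \<open>\<one> = t \<otimes> f(z)\<close> and \<open>\<one> = t \<otimes> g(inv z)\<close>, and the shorter one can always be used
  to shorten the longer one.\<close>

lemma conch_subring_valuation:
  assumes c: "conch_subring V t" and z: "z \<in> carrier R" "z \<noteq> \<zero>"
  shows "z \<in> V \<or> inv z \<in> V"
proof (rule ccontr)
  note V = conch_subringD[OF c]
  define w where "w = inv z"
  have w: "w \<in> carrier R" and zw: "z \<otimes> w = \<one>" and wz: "w \<otimes> z = \<one>"
    using nonzero_inv_closed[OF z] nonzero_r_inv[OF z] nonzero_l_inv[OF z] unfolding w_def by auto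
  define rel where "rel x n \<longleftrightarrow> (\<exists>cs. set cs \<subseteq> V \<and> length cs = n \<and> \<one> = t \<otimes> horner cs x)" for x n
  have no_rels: "\<not> (rel z m \<and> rel w n)" for m n
  proof (induction "m + n" arbitrary: m n rule: less_induct)
    case less
    show ?case
    proof
      assume "rel z m \<and> rel w n"
      then obtain cs ds where cs: "set cs \<subseteq> V" "length cs = m" "\<one> = t \<otimes> horner cs z"
        and ds: "set ds \<subseteq> V" "length ds = n" "\<one> = t \<otimes> horner ds w"
        unfolding rel_def by blast
      show False
      proof (cases "n \<le> m")
        case True
        then obtain fs where "set fs \<subseteq> V" "length fs < m" "\<one> = t \<otimes> horner fs z"
          using conch_subring_relation_shorten[OF c z(1) w zw cs(1,3) ds(1) _ ds(3)] cs(2) ds(2) by auto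
        then show False using less[of "length fs" n] ds unfolding rel_def by auto
      next
        case False
        then obtain fs where "set fs \<subseteq> V" "length fs < n" "\<one> = t \<otimes> horner fs w"
          using conch_subring_relation_shorten[OF c w z(1) wz ds(1,3) cs(1) _ cs(3)] cs(2) ds(2) by auto
        then show False using less[of m "length fs"] cs unfolding rel_def by auto
      qed
    qed
  qed
  assume "\<not> (z \<in> V \<or> inv z \<in> V)"
  then show False
    using no_rels conch_subring_relation[OF c z(1)] conch_subring_relation[OF c w] unfolding rel_def w_def
    by blast
qed

lemma conch_subring_integrally_closed:
  assumes c: "conch_subring V t" and z: "z \<in> carrier R"
    and cs: "set cs \<subseteq> V" "length cs \<le> n" and root: "z [^] n = horner cs z"
  shows "z \<in> V"
proof (rule ccontr)
  note V = conch_subringD[OF c]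
  assume nz: "z \<notin> V"
  then have z0: "z \<noteq> \<zero>" using subringE(2)[OF V(1)] by auto
  have wV: "inv z \<in> V" using conch_subring_valuation[OF c z z0] nz by auto
  have w: "inv z \<in> carrier R" using nonzero_inv_closed[OF z z0] .
  obtain m where n: "n = Suc m" using cs(2) root z by (cases n) auto
  have "inv z [^] m \<otimes> horner cs z \<in> V"
    using pow_mult_horner_inverse_in_subring[OF V(1) wV z nonzero_l_inv[OF z z0] cs(1)] cs(2) n by simp
  moreover have "inv z [^] m \<otimes> horner cs z = z"
  proof -
    have "inv z [^] m \<otimes> horner cs z = (inv z [^] m \<otimes> z [^] m) \<otimes> z"
      using root n w z by (simp add: m_assoc)
    also have "\<dots> = z" using nat_pow_distrib[OF w z] nonzero_l_inv[OF z z0] z by simp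
    finally show ?thesis .
  qed
  ultimately show False using nz by simp
qed

end


section \<open>Discrete valuation subrings of a field\<close>

context field
begin

definition subring_unit :: "'a set \<Rightarrow> 'a \<Rightarrow> bool" where
  "subring_unit S u \<longleftrightarrow> u \<in> S \<and> u \<noteq> \<zero> \<and> inv u \<in> S"

text \<open>\<open>uniformizer S t\<close> says that \<open>S\<close> is a discrete valuation ring with uniformizer \<open>t\<close>.\<close>

definition uniformizer :: "'a set \<Rightarrow> 'a \<Rightarrow> bool" where
  "uniformizer S t \<longleftrightarrow> subring S R \<and> t \<in> S \<and> t \<noteq> \<zero> \<and> inv t \<notin> S \<and>
     (\<forall>s\<in>S. s \<noteq> \<zero> \<longrightarrow> (\<exists>k::nat. \<exists>u. subring_unit S u \<and> s = t [^] k \<otimes> u))"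

lemma uniformizerD:
  assumes "uniformizer S t"
  shows "subring S R" "t \<in> S" "t \<noteq> \<zero>" "inv t \<notin> S" "t \<in> carrier R" "S \<subseteq> carrier R"
    "\<And>s. s \<in> S \<Longrightarrow> s \<noteq> \<zero> \<Longrightarrow> \<exists>k::nat. \<exists>u. subring_unit S u \<and> s = t [^] k \<otimes> u"
  using assms subringE(1) unfolding uniformizer_def by auto

lemma subring_unitD:
  assumes "subring S R" "subring_unit S u"
  shows "u \<in> S" "u \<noteq> \<zero>" "inv u \<in> S" "u \<in> carrier R" "inv u \<in> carrier R"
  using assms subringE(1) unfolding subring_unit_def by auto

lemma subring_unit_one: "subring S R \<Longrightarrow> subring_unit S \<one>"
  unfolding subring_unit_def using subringE(3) comm_inv_char[of \<one> \<one>] by auto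

lemma subring_unit_mult:
  assumes S: "subring S R" and u: "subring_unit S u" and v: "subring_unit S v"
  shows "subring_unit S (u \<otimes> v)"
  using subring_unitD[OF S u] subring_unitD[OF S v] nonzero_inv_mult[of u v] subringE(6)[OF S] integral
  unfolding subring_unit_def by auto

lemma uniformizer_not_dvd_unit:
  assumes S: "uniformizer S t" and u: "subring_unit S u" and a: "a \<in> S"
  shows "u \<noteq> t \<otimes> a"
proof
  note G = uniformizerD[OF S]
  note U = subring_unitD[OF G(1) u]
  assume eq: "u = t \<otimes> a"
  have ac: "a \<in> carrier R" using a G(6) by blast
  have "t \<otimes> (a \<otimes> inv u) = \<one>" using eq nonzero_r_inv[OF U(4,2)] G(5) ac U(5) by (simp add: m_assoc)
  then have "inv t = a \<otimes> inv u" using comm_inv_char G(5) ac U(5) by simp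
  then show False using G(4) a U(3) subringE(6)[OF G(1)] by simp
qed

lemma uniformizer_unit_or_multiple:
  assumes S: "uniformizer S t" and s: "s \<in> S"
  shows "subring_unit S s \<or> (\<exists>a\<in>S. s = t \<otimes> a)"
proof (cases "s = \<zero>")
  case True
  then show ?thesis using uniformizerD(1,5)[OF S] subringE(2) by (metis r_null)
next
  case False
  note G = uniformizerD[OF S]
  obtain k u where ku: "subring_unit S u" "s = t [^] (k::nat) \<otimes> u" using G(7)[OF s False] by blast
  have uc: "u \<in> carrier R" using subring_unitD(4)[OF G(1) ku(1)] .
  show ?thesis
  proof (cases k)
    case 0
    then show ?thesis using ku uc by simp
  next
    case (Suc k')
    then have "s = t \<otimes> (t [^] k' \<otimes> u)" using ku uc G(5) by (simp add: nat_pow_Suc2 m_assoc m_lcomm)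
    moreover have "t [^] k' \<otimes> u \<in> S"
      using subring_nat_pow_closed[OF G(1,2)] subring_unitD(1)[OF G(1) ku(1)] subringE(6)[OF G(1)] by blast
    ultimately show ?thesis by blast
  qed
qed

lemma uniformizer_pow_not_dvd:
  assumes S: "uniformizer S t" and s: "s \<in> S" "s \<noteq> \<zero>"
  shows "\<exists>n. \<forall>a\<in>S. s \<noteq> t [^] (n::nat) \<otimes> a"
proof -
  note G = uniformizerD[OF S]
  obtain k u where ku: "subring_unit S u" "s = t [^] (k::nat) \<otimes> u" using G(7)[OF s] by blast
  have uc: "u \<in> carrier R" using subring_unitD(4)[OF G(1) ku(1)] .
  have tk: "t [^] k \<in> carrier R" "t [^] k \<noteq> \<zero>" using G(3,5) nonzero_pow_nonzero by auto
  have "s \<noteq> t [^] Suc k \<otimes> a" if a: "a \<in> S" for a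
  proof
    have ac: "a \<in> carrier R" using a G(6) by blast
    assume "s = t [^] Suc k \<otimes> a"
    then have "t [^] k \<otimes> u = t [^] k \<otimes> (t \<otimes> a)" using ku(2) G(5) ac by (simp add: m_assoc)
    then have "u = t \<otimes> a" using m_lcancel[OF tk(2,1)] uc G(5) ac by simp
    then show False using uniformizer_not_dvd_unit[OF S ku(1) a] by simp
  qed
  then show ?thesis by blast
qed

lemma uniformizer_horner_split:
  assumes S: "uniformizer S t" and y: "y \<in> carrier R"
  shows "set cs \<subseteq> S \<Longrightarrow> \<not> (\<exists>a\<in>S. coeff_at cs i = t \<otimes> a) \<Longrightarrow>
    \<exists>A0 k u A1. A0 \<in> simple_extension S y \<and> subring_unit S u \<and> A1 \<in> simple_extension S y \<and>
      horner cs y = t \<otimes> A0 \<oplus> y [^] (k::nat) \<otimes> (u \<oplus> y \<otimes> A1)"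
proof (induction cs arbitrary: i)
  case Nil
  then show ?case using uniformizerD(1,5)[OF S] subringE(2) by (metis coeff_at_Nil r_null)
next
  case (Cons c cs)
  note G = uniformizerD[OF S]
  let ?P = "simple_extension S y"
  have P: "subring ?P R" using simple_extension_is_subring[OF G(1) y] .
  have PC: "?P \<subseteq> carrier R" using subringE(1)[OF P] .
  have SP: "S \<subseteq> ?P" using simple_extension_incl[OF G(6) y] .
  have cS: "c \<in> S" "set cs \<subseteq> S" using Cons.prems by auto
  have hP: "horner cs y \<in> ?P" using horner_in_simple_extension[OF G(6) y cS(2)] .
  have cc: "c \<in> carrier R" and hc: "horner cs y \<in> carrier R" using cS(1) G(6) hP PC by auto
  show ?case
  proof (cases "subring_unit S c")
    case True
    have "horner (c # cs) y = t \<otimes> \<zero> \<oplus> y [^] (0::nat) \<otimes> (c \<oplus> y \<otimes> horner cs y)"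
      using cc hc y G(5) by simp
    then show ?thesis using True hP subringE(2)[OF P] by blast
  next
    case False
    then obtain a where a: "a \<in> S" "c = t \<otimes> a" using uniformizer_unit_or_multiple[OF S cS(1)] by blast
    obtain i' where "i = Suc i'" using Cons.prems(2) a by (cases i) auto
    then have "\<not> (\<exists>a\<in>S. coeff_at cs i' = t \<otimes> a)" using Cons.prems(2) by simp
    then obtain A0 k u A1 where IH: "A0 \<in> ?P" "subring_unit S u" "A1 \<in> ?P"
        "horner cs y = t \<otimes> A0 \<oplus> y [^] (k::nat) \<otimes> (u \<oplus> y \<otimes> A1)"
      using Cons.IH[OF cS(2)] by blast
    have ac: "a \<in> carrier R" and uc: "u \<in> carrier R" and A0c: "A0 \<in> carrier R" and A1c: "A1 \<in> carrier R"
      using a(1) G(6) subring_unitD(4)[OF G(1) IH(2)] IH(1,3) PC by auto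
    have "t \<otimes> a \<oplus> y \<otimes> (t \<otimes> A0 \<oplus> Y \<otimes> (u \<oplus> y \<otimes> A1)) = t \<otimes> (a \<oplus> y \<otimes> A0) \<oplus> (Y \<otimes> y) \<otimes> (u \<oplus> y \<otimes> A1)"
      if "Y \<in> carrier R" for Y
      using that G(5) ac y A0c uc A1c by algebra
    then have "horner (c # cs) y = t \<otimes> (a \<oplus> y \<otimes> A0) \<oplus> y [^] Suc k \<otimes> (u \<oplus> y \<otimes> A1)"
      using IH(4) a(2) y by simp
    moreover have "a \<oplus> y \<otimes> A0 \<in> ?P"
      using SP a(1) simple_extension_mem[OF G(1) y] IH(1) subringE(6,7)[OF P] by blast
    ultimately show ?thesis using IH(2,3) by blast
  qed
qed

lemma uniformizer_simple_extension_split: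
  assumes S: "uniformizer S t" and y: "y \<in> carrier R"
    and a: "a \<in> simple_extension S y" "\<not> (\<exists>c\<in>simple_extension S y. a = t \<otimes> c)"
  shows "\<exists>A0 k u A1. A0 \<in> simple_extension S y \<and> subring_unit S u \<and> A1 \<in> simple_extension S y \<and>
      a = t \<otimes> A0 \<oplus> y [^] (k::nat) \<otimes> (u \<oplus> y \<otimes> A1)"
proof -
  note G = uniformizerD[OF S]
  obtain cs where cs: "set cs \<subseteq> S" "a = horner cs y"
    using a(1) simple_extension_eq_horner[OF G(6) y] by blast
  have "\<exists>i. \<not> (\<exists>c\<in>S. coeff_at cs i = t \<otimes> c)"
  proof (rule ccontr)
    assume "\<not> ?thesis"
    then obtain bs where "set bs \<subseteq> S" "a = t \<otimes> horner bs y"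
      using horner_coeffs_multiples[OF G(1,5) y cs(1)] cs(2) by blast
    then show False using a(2) horner_in_simple_extension[OF G(6) y] by blast
  qed
  then show ?thesis using uniformizer_horner_split[OF S y cs(1)] cs(2) by blast
qed

lemma uniformizer_unit_part_not_multiple:
  assumes S: "uniformizer S t" and y: "y \<in> carrier R" and tr: "horner_transcendental S y"
    and u: "subring_unit S u" and C: "C \<in> simple_extension S y"
  shows "\<not> (\<exists>e\<in>simple_extension S y. y [^] (n::nat) \<otimes> (u \<oplus> y \<otimes> C) = t \<otimes> e)"
proof
  note G = uniformizerD[OF S]
  assume "\<exists>e\<in>simple_extension S y. y [^] n \<otimes> (u \<oplus> y \<otimes> C) = t \<otimes> e"
  then obtain e where e: "e \<in> simple_extension S y" "y [^] n \<otimes> (u \<oplus> y \<otimes> C) = t \<otimes> e" by blast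
  obtain es where es: "set es \<subseteq> S" "e = horner es y"
    using e(1) simple_extension_eq_horner[OF G(6) y] by auto
  obtain Cs where Cs: "set Cs \<subseteq> S" "C = horner Cs y"
    using C simple_extension_eq_horner[OF G(6) y] by auto
  have uS: "u \<in> S" using subring_unitD(1)[OF G(1) u] .
  have lS: "set (replicate n \<zero> @ u # Cs) \<subseteq> S" using Cs(1) uS subringE(2)[OF G(1)] by auto
  have "set (replicate n \<zero>) \<subseteq> {\<zero>}" "set (replicate n \<zero>) \<subseteq> carrier R" "set (u # Cs) \<subseteq> carrier R"
    "set es \<subseteq> carrier R"
    using lS es(1) G(6) by auto
  then have "horner (replicate n \<zero> @ u # Cs) y = t \<otimes> horner es y"
    using horner_append[of "replicate n \<zero>" "u # Cs" y] horner_zeros[of "replicate n \<zero>" y]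
      y Cs(2) es(2) e(2) G(5) horner_closed[of es y] by simp
  then have "coeff_at (replicate n \<zero> @ u # Cs) n = t \<otimes> coeff_at es n"
    using horner_transcendental_coeff_mult[OF G(1) y tr G(2) lS es(1)] by simp
  then show False
    using uniformizer_not_dvd_unit[OF S u coeff_at_in_subring[OF G(1) es(1)]] by (simp add: coeff_at_monom)
qed

text \<open>Gauss's lemma: for \<open>y\<close> transcendental over \<open>S\<close>, the ideal \<open>t S[y]\<close> is prime.\<close>

lemma uniformizer_simple_extension_prime:
  assumes S: "uniformizer S t" and y: "y \<in> carrier R" and tr: "horner_transcendental S y"
    and a: "a \<in> simple_extension S y" "\<not> (\<exists>c\<in>simple_extension S y. a = t \<otimes> c)"
    and b: "b \<in> simple_extension S y" "\<not> (\<exists>c\<in>simple_extension S y. b = t \<otimes> c)"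
  shows "\<not> (\<exists>e\<in>simple_extension S y. a \<otimes> b = t \<otimes> e)"
proof
  note G = uniformizerD[OF S]
  let ?P = "simple_extension S y"
  have P: "subring ?P R" using simple_extension_is_subring[OF G(1) y] .
  have PC: "?P \<subseteq> carrier R" using subringE(1)[OF P] .
  have SP: "S \<subseteq> ?P" using simple_extension_incl[OF G(6) y] .
  obtain A0 k u A1 where da: "A0 \<in> ?P" "subring_unit S u" "A1 \<in> ?P"
      "a = t \<otimes> A0 \<oplus> y [^] (k::nat) \<otimes> (u \<oplus> y \<otimes> A1)"
    using uniformizer_simple_extension_split[OF S y a] by blast
  obtain B0 l v B1 where db: "B0 \<in> ?P" "subring_unit S v" "B1 \<in> ?P"
      "b = t \<otimes> B0 \<oplus> y [^] (l::nat) \<otimes> (v \<oplus> y \<otimes> B1)"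
    using uniformizer_simple_extension_split[OF S y b] by blast
  have uv: "u \<in> ?P" "v \<in> ?P" using da(2) db(2) SP subring_unitD(1)[OF G(1)] by auto
  obtain E C where EC: "E \<in> ?P" "C \<in> ?P" "a \<otimes> b = t \<otimes> E \<oplus> y [^] (k + l) \<otimes> (u \<otimes> v \<oplus> y \<otimes> C)"
    using subring_split_form_mult[OF P _ simple_extension_mem[OF G(1) y] da(1,3) db(1,3) uv]
      SP G(2) da(4) db(4) by blast
  have Zc: "y [^] (k + l) \<otimes> (u \<otimes> v \<oplus> y \<otimes> C) \<in> carrier R"
    using EC(2) uv PC y by blast
  assume "\<exists>e\<in>?P. a \<otimes> b = t \<otimes> e"
  then obtain e where e: "e \<in> ?P" "a \<otimes> b = t \<otimes> e" by blast
  have ec: "e \<in> carrier R" "E \<in> carrier R" using e(1) EC(1) PC by auto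
  have "t \<otimes> (e \<ominus> E) = t \<otimes> e \<ominus> t \<otimes> E" using ec G(5) by algebra
  also have "\<dots> = (t \<otimes> E \<oplus> y [^] (k + l) \<otimes> (u \<otimes> v \<oplus> y \<otimes> C)) \<ominus> t \<otimes> E"
    using e(2) EC(3) by simp
  also have "\<dots> = y [^] (k + l) \<otimes> (u \<otimes> v \<oplus> y \<otimes> C)"
    using ec(2) G(5) Zc by algebra
  finally have "y [^] (k + l) \<otimes> (u \<otimes> v \<oplus> y \<otimes> C) = t \<otimes> (e \<ominus> E)" ..
  moreover have "e \<ominus> E \<in> ?P" using e(1) EC(1) subringE(5,7)[OF P] by (simp add: a_minus_def)
  ultimately show False
    using uniformizer_unit_part_not_multiple[OF S y tr subring_unit_mult[OF G(1) da(2) db(2)] EC(2)]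
    by blast
qed

definition non_multiples :: "'a set \<Rightarrow> 'a \<Rightarrow> 'a set" where
  "non_multiples P t = {b \<in> P. \<not> (\<exists>c\<in>P. b = t \<otimes> c)}"

definition fractions :: "'a set \<Rightarrow> 'a set \<Rightarrow> 'a set" where
  "fractions P N = {a \<otimes> inv b | a b. a \<in> P \<and> b \<in> N}"

lemma uniformizer_simple_extension_pow_not_dvd:
  assumes S: "uniformizer S t" and y: "y \<in> carrier R" and tr: "horner_transcendental S y"
    and a: "a \<in> simple_extension S y" "a \<noteq> \<zero>"
  shows "\<exists>n. \<not> (\<exists>b\<in>simple_extension S y. a = t [^] (n::nat) \<otimes> b)"
proof -
  note G = uniformizerD[OF S]
  obtain cs where cs: "set cs \<subseteq> S" "a = horner cs y"
    using a(1) simple_extension_eq_horner[OF G(6) y] by blast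
  have "\<not> set cs \<subseteq> {\<zero>}" using a(2) cs horner_zeros[OF _ y] by auto
  then obtain i where "i < length cs" "cs ! i \<noteq> \<zero>" by (metis in_set_conv_nth singletonI subsetI)
  then have i: "coeff_at cs i \<noteq> \<zero>" by (simp add: coeff_at_def)
  obtain n where n: "\<forall>b\<in>S. coeff_at cs i \<noteq> t [^] (n::nat) \<otimes> b"
    using uniformizer_pow_not_dvd[OF S coeff_at_in_subring[OF G(1) cs(1)] i] by blast
  have "a \<noteq> t [^] n \<otimes> b" if b: "b \<in> simple_extension S y" for b
  proof
    obtain bs where bs: "set bs \<subseteq> S" "b = horner bs y"
      using b simple_extension_eq_horner[OF G(6) y] by blast
    assume "a = t [^] n \<otimes> b"
    then have "coeff_at cs i = t [^] n \<otimes> coeff_at bs i"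
      using horner_transcendental_coeff_mult[OF G(1) y tr subring_nat_pow_closed[OF G(1,2)] cs(1) bs(1)]
        cs(2) bs(2) by simp
    then show False using n coeff_at_in_subring[OF G(1) bs(1)] by blast
  qed
  then show ?thesis by blast
qed

lemma uniformizer_simple_extension_factor:
  assumes S: "uniformizer S t" and y: "y \<in> carrier R" and tr: "horner_transcendental S y"
    and a: "a \<in> simple_extension S y" "a \<noteq> \<zero>"
  shows "\<exists>k a'. a' \<in> non_multiples (simple_extension S y) t \<and> a = t [^] (k::nat) \<otimes> a'"
proof -
  note G = uniformizerD[OF S]
  let ?P = "simple_extension S y"
  define dvd_pow where "dvd_pow n \<longleftrightarrow> (\<exists>b\<in>?P. a = t [^] (n::nat) \<otimes> b)" for n
  obtain n where "\<not> dvd_pow n"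
    using uniformizer_simple_extension_pow_not_dvd[OF S y tr a] unfolding dvd_pow_def by blast
  moreover have "dvd_pow 0"
    unfolding dvd_pow_def using a(1) simple_extension_in_carrier[OF G(6) y] by force
  ultimately obtain k where k: "dvd_pow k" "\<not> dvd_pow (Suc k)"
    using ex_least_nat_less[of "\<lambda>i. \<not> dvd_pow i"] by auto
  then obtain a' where a': "a' \<in> ?P" "a = t [^] k \<otimes> a'" unfolding dvd_pow_def by blast
  have "\<not> (\<exists>b\<in>?P. a' = t \<otimes> b)"
  proof
    assume "\<exists>b\<in>?P. a' = t \<otimes> b"
    then obtain b where b: "b \<in> ?P" "a' = t \<otimes> b" by blast
    then have "a = t [^] Suc k \<otimes> b"
      using a'(2) G(5) simple_extension_in_carrier[OF G(6) y] by (auto simp: m_assoc)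
    then show False using k(2) b(1) unfolding dvd_pow_def by blast
  qed
  then show ?thesis using a' unfolding non_multiples_def by blast
qed

lemma nonzero_fraction_mult:
  assumes "a \<in> carrier R" "b \<in> carrier R" "b \<noteq> \<zero>" "c \<in> carrier R" "d \<in> carrier R" "d \<noteq> \<zero>"
  shows "(a \<otimes> inv b) \<otimes> (c \<otimes> inv d) = (a \<otimes> c) \<otimes> inv (b \<otimes> d)"
  using assms nonzero_inv_mult nonzero_inv_closed by (simp add: m_ac)

lemma nonzero_fraction_add:
  assumes "a \<in> carrier R" "b \<in> carrier R" "b \<noteq> \<zero>" "c \<in> carrier R" "d \<in> carrier R" "d \<noteq> \<zero>"
  shows "(a \<otimes> inv b) \<oplus> (c \<otimes> inv d) = (a \<otimes> d \<oplus> c \<otimes> b) \<otimes> inv (b \<otimes> d)"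
proof -
  have "(a \<otimes> d \<oplus> c \<otimes> b) \<otimes> (v \<otimes> w) = a \<otimes> v \<otimes> (d \<otimes> w) \<oplus> c \<otimes> w \<otimes> (b \<otimes> v)"
    if "v \<in> carrier R" "w \<in> carrier R" for v w
    using that assms by algebra
  then show ?thesis using assms nonzero_inv_mult nonzero_inv_closed nonzero_r_inv by simp
qed

lemma subring_fractions:
  assumes P: "subring P R" and N: "N \<subseteq> P" "\<zero> \<notin> N" "\<one> \<in> N" "\<And>b d. b \<in> N \<Longrightarrow> d \<in> N \<Longrightarrow> b \<otimes> d \<in> N"
  shows "subring (fractions P N) R"
proof (rule subringI)
  have PC: "P \<subseteq> carrier R" using subringE(1)[OF P] .
  have Nc: "b \<in> carrier R" "b \<noteq> \<zero>" "inv b \<in> carrier R" if "b \<in> N" for b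
    using that N(1,2) PC nonzero_inv_closed by auto
  show "fractions P N \<subseteq> carrier R" unfolding fractions_def using PC Nc by auto
  have "\<one> = \<one> \<otimes> inv \<one>" using comm_inv_char[of \<one> \<one>] by simp
  then show "\<one> \<in> fractions P N" unfolding fractions_def using subringE(3)[OF P] N(3) by blast
next
  fix x assume "x \<in> fractions P N"
  then obtain a b where ab: "a \<in> P" "b \<in> N" "x = a \<otimes> inv b" unfolding fractions_def by blast
  moreover have "a \<in> carrier R" "b \<in> carrier R" "b \<noteq> \<zero>" using ab N(1,2) subringE(1)[OF P] by auto
  ultimately have "\<ominus> x = (\<ominus> a) \<otimes> inv b" using nonzero_inv_closed by (simp add: l_minus)
  moreover have "\<ominus> a \<in> P" using ab subringE(5)[OF P] by blast
  ultimately show "\<ominus> x \<in> fractions P N" unfolding fractions_def using ab(2) by blast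
next
  fix x1 x2 assume "x1 \<in> fractions P N" "x2 \<in> fractions P N"
  then obtain a b c d where abcd: "a \<in> P" "b \<in> N" "x1 = a \<otimes> inv b" "c \<in> P" "d \<in> N" "x2 = c \<otimes> inv d"
    unfolding fractions_def by blast
  have c: "a \<in> carrier R" "b \<in> carrier R" "b \<noteq> \<zero>" "c \<in> carrier R" "d \<in> carrier R" "d \<noteq> \<zero>"
    using abcd N(1,2) subringE(1)[OF P] by auto
  have bd: "b \<otimes> d \<in> N" using abcd N(4) by blast
  have "a \<otimes> c \<in> P" using subringE(6)[OF P] abcd by auto
  then show "x1 \<otimes> x2 \<in> fractions P N"
    unfolding fractions_def using nonzero_fraction_mult[OF c] abcd(3,6) bd by blast
  have "a \<otimes> d \<oplus> c \<otimes> b \<in> P" using abcd N(1) by (blast intro: subringE(6,7)[OF P])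
  then show "x1 \<oplus> x2 \<in> fractions P N"
    unfolding fractions_def using nonzero_fraction_add[OF c] abcd(3,6) bd by blast
qed

lemma fractions_incl: "P \<subseteq> carrier R \<Longrightarrow> \<one> \<in> N \<Longrightarrow> P \<subseteq> fractions P N"
  unfolding fractions_def using comm_inv_char[of \<one> \<one>] by force

lemma uniformizer_one_non_multiple:
  assumes S: "uniformizer S t" and y: "y \<in> carrier R" and tr: "horner_transcendental S y"
  shows "\<one> \<in> non_multiples (simple_extension S y) t"
proof -
  note G = uniformizerD[OF S]
  have "\<one> \<noteq> t \<otimes> c" if c: "c \<in> simple_extension S y" for c
  proof
    obtain cs where cs: "set cs \<subseteq> S" "c = horner cs y"
      using c simple_extension_eq_horner[OF G(6) y] by blast
    assume "\<one> = t \<otimes> c"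
    then have eq: "horner [\<one>] y = t \<otimes> horner cs y"
      using cs y G(5,6) horner_closed[of cs y] by auto
    have one: "set [\<one>] \<subseteq> S" using subringE(3)[OF G(1)] by simp
    have "coeff_at [\<one>] 0 = t \<otimes> coeff_at cs 0"
      using horner_transcendental_coeff_mult[OF G(1) y tr G(2) one cs(1) eq] .
    then show False
      using uniformizer_not_dvd_unit[OF S subring_unit_one[OF G(1)] coeff_at_in_subring[OF G(1) cs(1)]]
      by simp
  qed
  then show ?thesis
    unfolding non_multiples_def using subringE(3)[OF simple_extension_is_subring[OF G(1) y]] by blast
qed

lemma uniformizer_non_multiples_multiplicative:
  assumes S: "uniformizer S t" and y: "y \<in> carrier R" and tr: "horner_transcendental S y"
  shows "\<zero> \<notin> non_multiples (simple_extension S y) t"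
    and "b \<in> non_multiples (simple_extension S y) t \<Longrightarrow> d \<in> non_multiples (simple_extension S y) t \<Longrightarrow>
      b \<otimes> d \<in> non_multiples (simple_extension S y) t"
proof -
  note G = uniformizerD[OF S]
  have P: "subring (simple_extension S y) R" using simple_extension_is_subring[OF G(1) y] .
  have "\<zero> = t \<otimes> \<zero>" using G(5) by simp
  then show "\<zero> \<notin> non_multiples (simple_extension S y) t"
    unfolding non_multiples_def using subringE(2)[OF P] by blast
  assume "b \<in> non_multiples (simple_extension S y) t" "d \<in> non_multiples (simple_extension S y) t"
  then show "b \<otimes> d \<in> non_multiples (simple_extension S y) t"
    using uniformizer_simple_extension_prime[OF S y tr] subringE(6)[OF P, of b d]
    unfolding non_multiples_def by simp
qed

lemma fractions_non_multiples_inv_notin: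
  assumes P: "P \<subseteq> carrier R" and t: "t \<in> carrier R" "t \<noteq> \<zero>" and N0: "\<zero> \<notin> non_multiples P t"
  shows "inv t \<notin> fractions P (non_multiples P t)"
proof
  assume "inv t \<in> fractions P (non_multiples P t)"
  then obtain a b where ab: "a \<in> P" "b \<in> non_multiples P t" "inv t = a \<otimes> inv b"
    unfolding fractions_def by blast
  have ac: "a \<in> carrier R" and bc: "b \<in> carrier R" "b \<noteq> \<zero>"
    using ab(1,2) N0 P unfolding non_multiples_def by auto
  have "b = (t \<otimes> inv t) \<otimes> b" using nonzero_r_inv[OF t] bc by simp
  also have "\<dots> = t \<otimes> a \<otimes> (inv b \<otimes> b)"
    using ab(3) ac bc t nonzero_inv_closed[of b] by (simp add: m_ac)
  also have "\<dots> = t \<otimes> a" using nonzero_l_inv[OF bc] ac t by simp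
  finally show False using ab(1,2) unfolding non_multiples_def by blast
qed

lemma uniformizer_fractions_factor:
  assumes S: "uniformizer S t" and y: "y \<in> carrier R" and tr: "horner_transcendental S y"
    and s: "s \<in> fractions (simple_extension S y) (non_multiples (simple_extension S y) t)" "s \<noteq> \<zero>"
  shows "\<exists>k::nat. \<exists>u.
    subring_unit (fractions (simple_extension S y) (non_multiples (simple_extension S y) t)) u \<and>
    s = t [^] k \<otimes> u"
proof -
  note G = uniformizerD[OF S]
  let ?P = "simple_extension S y"
  let ?N = "non_multiples ?P t"
  have PC: "?P \<subseteq> carrier R" using simple_extension_in_carrier[OF G(6) y] .
  have Nc: "b \<in> ?P" "b \<in> carrier R" "b \<noteq> \<zero>" if "b \<in> ?N" for b
    using that PC uniformizer_non_multiples_multiplicative(1)[OF S y tr] unfolding non_multiples_def by auto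
  obtain a b where ab: "a \<in> ?P" "b \<in> ?N" "s = a \<otimes> inv b" using s(1) unfolding fractions_def by blast
  have bc: "b \<in> carrier R" "b \<noteq> \<zero>" "inv b \<in> carrier R" "inv b \<noteq> \<zero>"
    using Nc[OF ab(2)] nonzero_inv_closed nonzero_inv_nonzero by auto
  have "a \<noteq> \<zero>" using s(2) ab(3) bc by auto
  then obtain k a' where ka: "a' \<in> ?N" "a = t [^] (k::nat) \<otimes> a'"
    using uniformizer_simple_extension_factor[OF S y tr ab(1)] by blast
  have a'c: "a' \<in> ?P" "a' \<in> carrier R" "a' \<noteq> \<zero>" using Nc[OF ka(1)] by auto
  define u where "u = a' \<otimes> inv b"
  have "u \<in> fractions ?P ?N" unfolding u_def fractions_def using a'c(1) ab(2) by blast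
  moreover have "u \<noteq> \<zero>" unfolding u_def using a'c bc integral by blast
  moreover have "inv u = b \<otimes> inv a'"
    unfolding u_def using nonzero_inv_mult[of a' "inv b"] a'c bc nonzero_inv_inv nonzero_inv_closed
    by (simp add: m_comm)
  then have "inv u \<in> fractions ?P ?N" unfolding fractions_def using Nc[OF ab(2)] ka(1) by blast
  moreover have "s = t [^] k \<otimes> u" unfolding u_def using ab(3) ka(2) a'c bc G(5) by (simp add: m_assoc)
  ultimately show ?thesis unfolding subring_unit_def by blast
qed

lemma uniformizer_fractions_non_multiples:
  assumes S: "uniformizer S t" and y: "y \<in> carrier R" and tr: "horner_transcendental S y"
  shows "uniformizer (fractions (simple_extension S y) (non_multiples (simple_extension S y) t)) t"
proof -
  note G = uniformizerD[OF S]
  note N = uniformizer_non_multiples_multiplicative[OF S y tr]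
  let ?P = "simple_extension S y"
  have P: "subring ?P R" using simple_extension_is_subring[OF G(1) y] .
  have PC: "?P \<subseteq> carrier R" using subringE(1)[OF P] .
  have N1: "\<one> \<in> non_multiples ?P t" using uniformizer_one_non_multiple[OF S y tr] .
  have "non_multiples ?P t \<subseteq> ?P" unfolding non_multiples_def by blast
  then have "subring (fractions ?P (non_multiples ?P t)) R"
    using subring_fractions[OF P _ N(1) N1] N(2) by blast
  moreover have "t \<in> fractions ?P (non_multiples ?P t)"
    using fractions_incl[OF PC N1] simple_extension_incl[OF G(6) y] G(2) by blast
  ultimately show ?thesis
    unfolding uniformizer_def
    using fractions_non_multiples_inv_notin[OF PC G(5,3) N(1)] uniformizer_fractions_factor[OF S y tr] G(3)
    by blast
qed

lemma uniformizer_transcendental_extension: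
  assumes S: "uniformizer S t" and y: "y \<in> carrier R" and tr: "horner_transcendental S y"
  shows "\<exists>S'. uniformizer S' t \<and> S \<subset> S'"
proof -
  note G = uniformizerD[OF S]
  let ?S' = "fractions (simple_extension S y) (non_multiples (simple_extension S y) t)"
  have PC: "simple_extension S y \<subseteq> carrier R" using simple_extension_in_carrier[OF G(6) y] .
  have PS': "simple_extension S y \<subseteq> ?S'"
    using fractions_incl[OF PC uniformizer_one_non_multiple[OF S y tr]] .
  have "y \<notin> S"
  proof
    assume "y \<in> S"
    then have "set [\<ominus> y, \<one>] \<subseteq> S" using subringE(3,5)[OF G(1)] by simp
    moreover have "horner [\<ominus> y, \<one>] y = \<zero>" using y by (simp add: l_neg)
    ultimately show False using tr unfolding horner_transcendental_def by fastforce
  qed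
  then have "S \<subset> ?S'"
    using PS' simple_extension_incl[OF G(6) y] simple_extension_mem[OF G(1) y] by blast
  then show ?thesis using uniformizer_fractions_non_multiples[OF S y tr] by blast
qed

lemma not_horner_transcendental_relation:
  assumes S: "subring S R" and y: "y \<in> carrier R" and ntr: "\<not> horner_transcendental S y"
  shows "\<exists>cs c. set cs \<subseteq> S \<and> c \<in> S \<and> c \<noteq> \<zero> \<and> horner cs y \<oplus> y [^] length cs \<otimes> c = \<zero>"
proof -
  obtain cs where cs: "set cs \<subseteq> S" "horner cs y = \<zero>" "\<not> set cs \<subseteq> {\<zero>}"
    using ntr unfolding horner_transcendental_def by blast
  then have "\<exists>x\<in>set cs. x \<noteq> \<zero>" by blast
  then obtain cs0 c zs where split: "cs = cs0 @ c # zs" "c \<noteq> \<zero>" "\<forall>z\<in>set zs. \<not> z \<noteq> \<zero>"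
    by (rule split_list_last_propE)
  have cS: "set cs0 \<subseteq> S" "c \<in> S" "set zs \<subseteq> S" using cs(1) split(1) by auto
  have SC: "S \<subseteq> carrier R" using subringE(1)[OF S] .
  have "set zs \<subseteq> {\<zero>}" using split(3) by auto
  then have "horner (c # zs) y = c" using horner_zeros[of zs y] cS SC y by auto
  then have "horner cs y = horner cs0 y \<oplus> y [^] length cs0 \<otimes> c"
    using horner_append[of cs0 "c # zs" y] split(1) cS SC y by auto
  with cs(2) cS split(2) show ?thesis by (intro exI[of _ cs0] exI[of _ c]) simp
qed

lemma uniformizer_algebraic_integral:
  assumes S: "uniformizer S t" and y: "y \<in> carrier R" and ntr: "\<not> horner_transcendental S y"
  shows "\<exists>k n es. set es \<subseteq> S \<and> length es \<le> n \<and>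
    (t [^] (k::nat) \<otimes> y) [^] (n::nat) = horner es (t [^] k \<otimes> y)"
proof -
  note G = uniformizerD[OF S]
  obtain cs c where rel: "set cs \<subseteq> S" "c \<in> S" "c \<noteq> \<zero>" "horner cs y \<oplus> y [^] length cs \<otimes> c = \<zero>"
    using not_horner_transcendental_relation[OF G(1) y ntr] by blast
  obtain k u where ku: "subring_unit S u" "c = t [^] (k::nat) \<otimes> u" using G(7)[OF rel(2,3)] by blast
  note U = subring_unitD[OF G(1) ku(1)]
  obtain m where "length cs = Suc m"
    using rel(2-4) G(6) y by (cases "length cs") auto
  then show ?thesis
    using horner_relation_integral[OF G(1,2) y rel(1) _ U(4,3) nonzero_l_inv[OF U(4,2)]] rel(4) ku(2)
    by blast
qed

lemma exists_maximal_uniformizer_subring: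
  assumes "uniformizer S0 t"
  shows "\<exists>S. uniformizer S t \<and> (\<forall>S'. uniformizer S' t \<and> S \<subseteq> S' \<longrightarrow> S' = S)"
proof -
  have "\<exists>S\<in>{S. uniformizer S t}. \<forall>S'\<in>{S. uniformizer S t}. S \<subseteq> S' \<longrightarrow> S' = S"
  proof (rule subset_Zorn_nonempty)
    show "{S. uniformizer S t} \<noteq> {}" using assms by blast
  next
    fix C assume C: "C \<noteq> {}" "subset.chain {S. uniformizer S t} C"
    then have CU: "\<And>S. S \<in> C \<Longrightarrow> uniformizer S t" by (auto simp: subset_chain_def)
    have sub: "subring (\<Union>C) R"
      using subring_chain_Union[OF C(1)] CU uniformizerD(1) C(2) unfolding subset_chain_def by blast
    have "t \<in> \<Union>C" "t \<noteq> \<zero>" "inv t \<notin> \<Union>C" using C(1) CU uniformizerD(2,3,4) by blast+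
    moreover have "\<exists>k::nat. \<exists>u. subring_unit (\<Union>C) u \<and> s = t [^] k \<otimes> u"
      if s: "s \<in> \<Union>C" "s \<noteq> \<zero>" for s
    proof -
      obtain S where S: "S \<in> C" "s \<in> S" using s(1) by blast
      then obtain k u where "subring_unit S u" "s = t [^] (k::nat) \<otimes> u"
        using uniformizerD(7)[OF CU[OF S(1)] S(2) s(2)] by blast
      moreover have "subring_unit (\<Union>C) u" using calculation(1) S(1) unfolding subring_unit_def by blast
      ultimately show ?thesis by blast
    qed
    ultimately show "\<Union>C \<in> {S. uniformizer S t}" using sub unfolding uniformizer_def by blast
  qed
  then show ?thesis by blast
qed

lemma exists_conch_subring_containing:
  assumes S: "subring S R" "t \<in> S" "t \<noteq> \<zero>" "inv t \<notin> S"
  shows "\<exists>V. conch_subring V t \<and> S \<subseteq> V"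
proof -
  let ?H = "{W. subring W R \<and> S \<subseteq> W \<and> inv t \<notin> W}"
  have "\<exists>V\<in>?H. \<forall>W\<in>?H. V \<subseteq> W \<longrightarrow> W = V"
  proof (rule subset_Zorn_nonempty)
    show "?H \<noteq> {}" using S by blast
  next
    fix C assume C: "C \<noteq> {}" "subset.chain ?H C"
    then have "subring (\<Union>C) R"
      using subring_chain_Union[OF C(1)] unfolding subset_chain_def by blast
    then show "\<Union>C \<in> ?H" using C unfolding subset_chain_def by blast
  qed
  then obtain V where V: "subring V R" "S \<subseteq> V" "inv t \<notin> V" and max: "\<forall>W\<in>?H. V \<subseteq> W \<longrightarrow> W = V"
    by blast
  then have "conch_subring V t" unfolding conch_subring_def using S by blast
  then show ?thesis using V(2) by blast
qed

text \<open>Over a subring \<open>S\<close> maximal among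
  those with uniformizer \<open>t\<close> every element \<open>y\<close> is algebraic (otherwise \<open>S[y]\<close> localized at
  \<open>t S[y]\<close> would be larger), so some \<open>t [^] k \<otimes> y\<close> is integral over \<open>S\<close>; and a conch subring
  containing \<open>S\<close> is integrally closed.\<close>

theorem exists_subring_localizing_to_field:
  assumes "uniformizer S0 t"
  shows "\<exists>V. subring V R \<and> t \<in> V \<and> inv t \<notin> V \<and> (\<forall>y\<in>carrier R. \<exists>k::nat. t [^] k \<otimes> y \<in> V)"
proof -
  obtain S where S: "uniformizer S t" and Smax: "\<And>S'. uniformizer S' t \<Longrightarrow> S \<subseteq> S' \<Longrightarrow> S' = S"
    using exists_maximal_uniformizer_subring[OF assms] by blast
  note G = uniformizerD[OF S]
  obtain V where c: "conch_subring V t" and SV: "S \<subseteq> V"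
    using exists_conch_subring_containing[OF G(1-4)] by blast
  have "\<exists>k::nat. t [^] k \<otimes> y \<in> V" if y: "y \<in> carrier R" for y
  proof (cases "horner_transcendental S y")
    case True
    then show ?thesis using uniformizer_transcendental_extension[OF S y] Smax by blast
  next
    case False
    then obtain k n es where "set es \<subseteq> S" "length es \<le> n"
        "(t [^] (k::nat) \<otimes> y) [^] (n::nat) = horner es (t [^] k \<otimes> y)"
      using uniformizer_algebraic_integral[OF S y] by blast
    then have "t [^] k \<otimes> y \<in> V"
      using conch_subring_integrally_closed[OF c] SV G(5) y by blast
    then show ?thesis by blast
  qed
  then show ?thesis using conch_subringD[OF c] by blast
qed

end


section \<open>The fraction field of \<open>R/Q\<close>\<close>

definition is_ideal :: "'a::comm_ring_1 set \<Rightarrow> bool" where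
  "is_ideal I \<longleftrightarrow> 0 \<in> I \<and> (\<forall>x\<in>I. \<forall>y\<in>I. x + y \<in> I) \<and> (\<forall>x\<in>I. \<forall>r. r * x \<in> I)"

definition is_prime_ideal :: "'a::comm_ring_1 set \<Rightarrow> bool" where
  "is_prime_ideal Q \<longleftrightarrow> is_ideal Q \<and> 1 \<notin> Q \<and> (\<forall>a b. a * b \<in> Q \<longrightarrow> a \<in> Q \<or> b \<in> Q)"

text \<open>\<open>quot_frac Q a b\<close> is the element \<open>a/b\<close> of the fraction field of \<open>R/Q\<close>, as the class of
  all pairs \<open>(c, d)\<close> with \<open>a d - c b \<in> Q\<close>.\<close>

definition quot_frac :: "'a::comm_ring_1 set \<Rightarrow> 'a \<Rightarrow> 'a \<Rightarrow> ('a \<times> 'a) set" where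
  "quot_frac Q a b = {(c, d). d \<notin> Q \<and> a * d - c * b \<in> Q}"

definition quot_frac_carrier :: "'a::comm_ring_1 set \<Rightarrow> ('a \<times> 'a) set set" where
  "quot_frac_carrier Q = {quot_frac Q a b | a b. b \<notin> Q}"

definition quot_frac_rep :: "'a::comm_ring_1 set \<Rightarrow> ('a \<times> 'a) set \<Rightarrow> 'a \<times> 'a" where
  "quot_frac_rep Q u = (SOME p. snd p \<notin> Q \<and> u = quot_frac Q (fst p) (snd p))"

definition quot_frac_add :: "'a::comm_ring_1 set \<Rightarrow> ('a \<times> 'a) set \<Rightarrow> ('a \<times> 'a) set \<Rightarrow> ('a \<times> 'a) set" where
  "quot_frac_add Q u v = (case (quot_frac_rep Q u, quot_frac_rep Q v) of
     ((a, b), (c, d)) \<Rightarrow> quot_frac Q (a * d + c * b) (b * d))"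

definition quot_frac_mult :: "'a::comm_ring_1 set \<Rightarrow> ('a \<times> 'a) set \<Rightarrow> ('a \<times> 'a) set \<Rightarrow> ('a \<times> 'a) set" where
  "quot_frac_mult Q u v = (case (quot_frac_rep Q u, quot_frac_rep Q v) of
     ((a, b), (c, d)) \<Rightarrow> quot_frac Q (a * c) (b * d))"

definition quot_frac_field :: "'a::comm_ring_1 set \<Rightarrow> ('a \<times> 'a) set ring" where
  "quot_frac_field Q = \<lparr>carrier = quot_frac_carrier Q, mult = quot_frac_mult Q, one = quot_frac Q 1 1,
     zero = quot_frac Q 0 1, add = quot_frac_add Q\<rparr>"

definition quot_frac_of :: "'a::comm_ring_1 set \<Rightarrow> 'a \<Rightarrow> ('a \<times> 'a) set" where
  "quot_frac_of Q r = quot_frac Q r 1"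

lemma quot_frac_field_simps [simp]:
  "carrier (quot_frac_field Q) = quot_frac_carrier Q" "mult (quot_frac_field Q) = quot_frac_mult Q"
  "one (quot_frac_field Q) = quot_frac Q 1 1" "zero (quot_frac_field Q) = quot_frac Q 0 1"
  "add (quot_frac_field Q) = quot_frac_add Q"
  unfolding quot_frac_field_def by simp_all

lemma quot_frac_in_carrier: "b \<notin> Q \<Longrightarrow> quot_frac Q a b \<in> quot_frac_carrier Q"
  unfolding quot_frac_carrier_def by blast

lemma quot_frac_carrierE:
  assumes "u \<in> quot_frac_carrier Q"
  obtains a b where "b \<notin> Q" "u = quot_frac Q a b"
  using assms unfolding quot_frac_carrier_def by blast

lemma quot_frac_rep:
  assumes "u \<in> quot_frac_carrier Q"
  shows "snd (quot_frac_rep Q u) \<notin> Q" "u = quot_frac Q (fst (quot_frac_rep Q u)) (snd (quot_frac_rep Q u))"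
proof -
  obtain a b where "b \<notin> Q" "u = quot_frac Q a b" using assms by (rule quot_frac_carrierE)
  then have "\<exists>p. snd p \<notin> Q \<and> u = quot_frac Q (fst p) (snd p)" by (intro exI[of _ "(a, b)"]) simp
  then have "snd (quot_frac_rep Q u) \<notin> Q \<and>
      u = quot_frac Q (fst (quot_frac_rep Q u)) (snd (quot_frac_rep Q u))"
    unfolding quot_frac_rep_def by (rule someI_ex)
  then show "snd (quot_frac_rep Q u) \<notin> Q"
    "u = quot_frac Q (fst (quot_frac_rep Q u)) (snd (quot_frac_rep Q u))" by auto
qed

context
  fixes Q :: "'a::comm_ring_1 set"
  assumes Q: "is_prime_ideal Q"
begin

lemma prime_ideal_zero: "0 \<in> Q"
  and prime_ideal_add: "x \<in> Q \<Longrightarrow> y \<in> Q \<Longrightarrow> x + y \<in> Q"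
  and prime_ideal_mult_left: "x \<in> Q \<Longrightarrow> r * x \<in> Q"
  and prime_ideal_one: "1 \<notin> Q"
  and prime_ideal_mult_notin: "a \<notin> Q \<Longrightarrow> b \<notin> Q \<Longrightarrow> a * b \<notin> Q"
  using Q unfolding is_prime_ideal_def is_ideal_def by blast+

lemma prime_ideal_uminus: "x \<in> Q \<Longrightarrow> - x \<in> Q"
  using prime_ideal_mult_left[of x "- 1"] by simp

lemma quot_frac_rel_trans:
  assumes "z \<notin> Q" "y \<notin> Q" "f \<notin> Q" "x * y - w * z \<in> Q" "w * f - e * y \<in> Q"
  shows "x * f - e * z \<in> Q"
proof -
  have "y * (x * f - e * z) = f * (x * y - w * z) + z * (w * f - e * y)" by (simp add: algebra_simps)
  also have "\<dots> \<in> Q" using assms(4,5) prime_ideal_add prime_ideal_mult_left by blast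
  finally show ?thesis using assms(2) prime_ideal_mult_notin by blast
qed

lemma quot_frac_eq_iff:
  assumes b: "b \<notin> Q" and d: "d \<notin> Q"
  shows "quot_frac Q a b = quot_frac Q c d \<longleftrightarrow> a * d - c * b \<in> Q"
proof
  assume "quot_frac Q a b = quot_frac Q c d"
  moreover have "(c, d) \<in> quot_frac Q c d" unfolding quot_frac_def using d prime_ideal_zero by simp
  ultimately show "a * d - c * b \<in> Q" unfolding quot_frac_def by auto
next
  assume h: "a * d - c * b \<in> Q"
  have h': "c * b - a * d \<in> Q" using prime_ideal_uminus[OF h] by (simp add: minus_diff_eq)
  show "quot_frac Q a b = quot_frac Q c d"
    unfolding quot_frac_def using quot_frac_rel_trans b d h h' by blast
qed

lemma quot_frac_eq_zero_iff: "b \<notin> Q \<Longrightarrow> quot_frac Q a b = quot_frac Q 0 1 \<longleftrightarrow> a \<in> Q"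
  using quot_frac_eq_iff[of b 1 a 0] prime_ideal_one by simp

lemma quot_frac_rep_quot_frac:
  assumes b: "b \<notin> Q" and r: "quot_frac_rep Q (quot_frac Q a b) = (a', b')"
  shows "b' \<notin> Q" "a' * b - a * b' \<in> Q"
proof -
  have u: "quot_frac Q a b \<in> quot_frac_carrier Q" using quot_frac_in_carrier b .
  show "b' \<notin> Q" using quot_frac_rep(1)[OF u] r by simp
  moreover have "quot_frac Q a' b' = quot_frac Q a b" using quot_frac_rep(2)[OF u] r by simp
  ultimately show "a' * b - a * b' \<in> Q" using quot_frac_eq_iff[OF _ b] by blast
qed

lemma quot_frac_add_eq:
  assumes b: "b \<notin> Q" and d: "d \<notin> Q"
  shows "quot_frac_add Q (quot_frac Q a b) (quot_frac Q c d) = quot_frac Q (a * d + c * b) (b * d)"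
proof -
  obtain a' b' where r1: "quot_frac_rep Q (quot_frac Q a b) = (a', b')" by fastforce
  obtain c' d' where r2: "quot_frac_rep Q (quot_frac Q c d) = (c', d')" by fastforce
  note 1 = quot_frac_rep_quot_frac[OF b r1] and 2 = quot_frac_rep_quot_frac[OF d r2]
  have "(a' * d' + c' * b') * (b * d) - (a * d + c * b) * (b' * d') =
        (d * d') * (a' * b - a * b') + (b * b') * (c' * d - c * d')" by (simp add: algebra_simps)
  also have "\<dots> \<in> Q" using 1 2 prime_ideal_add prime_ideal_mult_left by blast
  finally show ?thesis
    unfolding quot_frac_add_def r1 r2
    using quot_frac_eq_iff prime_ideal_mult_notin 1(1) 2(1) b d by simp
qed

lemma quot_frac_mult_eq:
  assumes b: "b \<notin> Q" and d: "d \<notin> Q"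
  shows "quot_frac_mult Q (quot_frac Q a b) (quot_frac Q c d) = quot_frac Q (a * c) (b * d)"
proof -
  obtain a' b' where r1: "quot_frac_rep Q (quot_frac Q a b) = (a', b')" by fastforce
  obtain c' d' where r2: "quot_frac_rep Q (quot_frac Q c d) = (c', d')" by fastforce
  note 1 = quot_frac_rep_quot_frac[OF b r1] and 2 = quot_frac_rep_quot_frac[OF d r2]
  have "(a' * c') * (b * d) - (a * c) * (b' * d') =
        (c' * d) * (a' * b - a * b') + (a * b') * (c' * d - c * d')" by (simp add: algebra_simps)
  also have "\<dots> \<in> Q" using 1 2 prime_ideal_add prime_ideal_mult_left by blast
  finally show ?thesis
    unfolding quot_frac_mult_def r1 r2
    using quot_frac_eq_iff prime_ideal_mult_notin 1(1) 2(1) b d by simp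
qed

lemma quot_frac_cong: "a * d - c * b = 0 \<Longrightarrow> b \<notin> Q \<Longrightarrow> d \<notin> Q \<Longrightarrow> quot_frac Q a b = quot_frac Q c d"
  using quot_frac_eq_iff prime_ideal_zero by simp

lemma quot_frac_field_is_abelian_group: "abelian_group (quot_frac_field Q)"
proof (rule abelian_groupI, unfold quot_frac_field_simps)
  fix u v assume "u \<in> quot_frac_carrier Q" "v \<in> quot_frac_carrier Q"
  then obtain a b c d where "b \<notin> Q" "u = quot_frac Q a b" "d \<notin> Q" "v = quot_frac Q c d"
    by (metis quot_frac_carrierE)
  then show "quot_frac_add Q u v \<in> quot_frac_carrier Q"
    using quot_frac_add_eq quot_frac_in_carrier[OF prime_ideal_mult_notin] by simp
next
  show "quot_frac Q 0 1 \<in> quot_frac_carrier Q" using quot_frac_in_carrier prime_ideal_one by blast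
next
  fix u v w assume "u \<in> quot_frac_carrier Q" "v \<in> quot_frac_carrier Q" "w \<in> quot_frac_carrier Q"
  then obtain a b c d e f where h: "b \<notin> Q" "u = quot_frac Q a b" "d \<notin> Q" "v = quot_frac Q c d"
      "f \<notin> Q" "w = quot_frac Q e f"
    by (metis quot_frac_carrierE)
  have "quot_frac_add Q (quot_frac_add Q u v) w
      = quot_frac Q ((a * d + c * b) * f + e * (b * d)) (b * d * f)"
    using h quot_frac_add_eq prime_ideal_mult_notin by simp
  also have "\<dots> = quot_frac Q (a * (d * f) + (c * f + e * d) * b) (b * (d * f))"
    by (rule arg_cong2[where f = "quot_frac Q"]) (simp_all add: algebra_simps)
  also have "\<dots> = quot_frac_add Q u (quot_frac_add Q v w)"
    using h quot_frac_add_eq prime_ideal_mult_notin by simp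
  finally show "quot_frac_add Q (quot_frac_add Q u v) w = quot_frac_add Q u (quot_frac_add Q v w)" .
next
  fix u v assume "u \<in> quot_frac_carrier Q" "v \<in> quot_frac_carrier Q"
  then obtain a b c d where h: "b \<notin> Q" "u = quot_frac Q a b" "d \<notin> Q" "v = quot_frac Q c d"
    by (metis quot_frac_carrierE)
  then show "quot_frac_add Q u v = quot_frac_add Q v u"
    using quot_frac_add_eq[of b d a c] quot_frac_add_eq[of d b c a] by (simp add: ac_simps)
next
  fix u assume "u \<in> quot_frac_carrier Q"
  then obtain a b where h: "b \<notin> Q" "u = quot_frac Q a b" by (metis quot_frac_carrierE)
  then show "quot_frac_add Q (quot_frac Q 0 1) u = u" using quot_frac_add_eq prime_ideal_one by simp
next
  fix u assume "u \<in> quot_frac_carrier Q"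
  then obtain a b where h: "b \<notin> Q" "u = quot_frac Q a b" by (metis quot_frac_carrierE)
  then have "quot_frac_add Q (quot_frac Q (- a) b) u = quot_frac Q (- a * b + a * b) (b * b)"
    using quot_frac_add_eq[OF h(1) h(1)] by simp
  also have "\<dots> = quot_frac Q 0 1"
    using quot_frac_cong prime_ideal_mult_notin[OF h(1) h(1)] prime_ideal_one by simp
  finally show "\<exists>v\<in>quot_frac_carrier Q. quot_frac_add Q v u = quot_frac Q 0 1"
    by (rule bexI[OF _ quot_frac_in_carrier[OF h(1)]])
qed

lemma quot_frac_field_is_comm_monoid: "comm_monoid (quot_frac_field Q)"
proof (rule comm_monoidI, unfold quot_frac_field_simps)
  fix u v assume "u \<in> quot_frac_carrier Q" "v \<in> quot_frac_carrier Q"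
  then obtain a b c d where "b \<notin> Q" "u = quot_frac Q a b" "d \<notin> Q" "v = quot_frac Q c d"
    by (metis quot_frac_carrierE)
  then show "quot_frac_mult Q u v \<in> quot_frac_carrier Q"
    using quot_frac_mult_eq quot_frac_in_carrier[OF prime_ideal_mult_notin] by simp
next
  show "quot_frac Q 1 1 \<in> quot_frac_carrier Q" using quot_frac_in_carrier prime_ideal_one by blast
next
  fix u v w assume "u \<in> quot_frac_carrier Q" "v \<in> quot_frac_carrier Q" "w \<in> quot_frac_carrier Q"
  then obtain a b c d e f where h: "b \<notin> Q" "u = quot_frac Q a b" "d \<notin> Q" "v = quot_frac Q c d"
      "f \<notin> Q" "w = quot_frac Q e f"
    by (metis quot_frac_carrierE)
  then show "quot_frac_mult Q (quot_frac_mult Q u v) w = quot_frac_mult Q u (quot_frac_mult Q v w)"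
    using quot_frac_mult_eq prime_ideal_mult_notin by (simp add: mult.assoc)
next
  fix u assume "u \<in> quot_frac_carrier Q"
  then obtain a b where h: "b \<notin> Q" "u = quot_frac Q a b" by (metis quot_frac_carrierE)
  then show "quot_frac_mult Q (quot_frac Q 1 1) u = u" using quot_frac_mult_eq prime_ideal_one by simp
next
  fix u v assume "u \<in> quot_frac_carrier Q" "v \<in> quot_frac_carrier Q"
  then obtain a b c d where h: "b \<notin> Q" "u = quot_frac Q a b" "d \<notin> Q" "v = quot_frac Q c d"
    by (metis quot_frac_carrierE)
  then show "quot_frac_mult Q u v = quot_frac_mult Q v u"
    using quot_frac_mult_eq[of b d a c] quot_frac_mult_eq[of d b c a] by (simp add: ac_simps)
qed

lemma quot_frac_field_is_cring: "cring (quot_frac_field Q)"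
proof (rule cringI[OF quot_frac_field_is_abelian_group quot_frac_field_is_comm_monoid],
    unfold quot_frac_field_simps)
  fix u v w assume "u \<in> quot_frac_carrier Q" "v \<in> quot_frac_carrier Q" "w \<in> quot_frac_carrier Q"
  then obtain a b c d e f where h: "b \<notin> Q" "u = quot_frac Q a b" "d \<notin> Q" "v = quot_frac Q c d"
      "f \<notin> Q" "w = quot_frac Q e f"
    by (metis quot_frac_carrierE)
  have n: "b * d \<notin> Q" "b * f \<notin> Q" "d * f \<notin> Q" "b * d * f \<notin> Q" "b * f * (d * f) \<notin> Q"
    using h prime_ideal_mult_notin by metis+
  have "((a * d + c * b) * e) * (b * f * (d * f)) - (a * e * (d * f) + c * e * (b * f)) * (b * d * f) = 0"
    by (simp add: algebra_simps)
  then have "quot_frac Q ((a * d + c * b) * e) (b * d * f)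
      = quot_frac Q (a * e * (d * f) + c * e * (b * f)) (b * f * (d * f))"
    using quot_frac_cong n(4,5) by blast
  moreover have "quot_frac_mult Q (quot_frac_add Q u v) w = quot_frac Q ((a * d + c * b) * e) (b * d * f)"
    using h quot_frac_add_eq[OF h(1,3)] quot_frac_mult_eq[OF n(1) h(5)] by simp
  moreover have "quot_frac_add Q (quot_frac_mult Q u w) (quot_frac_mult Q v w)
      = quot_frac Q (a * e * (d * f) + c * e * (b * f)) (b * f * (d * f))"
    using h quot_frac_mult_eq[OF h(1,5)] quot_frac_mult_eq[OF h(3,5)] quot_frac_add_eq[OF n(2,3)] by simp
  ultimately show "quot_frac_mult Q (quot_frac_add Q u v) w
      = quot_frac_add Q (quot_frac_mult Q u w) (quot_frac_mult Q v w)"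
    by simp
qed

lemma quot_frac_field_is_field: "field (quot_frac_field Q)"
proof (rule cring.cring_fieldI[OF quot_frac_field_is_cring], unfold quot_frac_field_simps)
  show "Units (quot_frac_field Q) = quot_frac_carrier Q - {quot_frac Q 0 1}"
  proof (intro equalityI subsetI)
    fix v assume v: "v \<in> Units (quot_frac_field Q)"
    then obtain u where u: "u \<in> quot_frac_carrier Q" "quot_frac_mult Q u v = quot_frac Q 1 1"
      and vc: "v \<in> quot_frac_carrier Q"
      unfolding Units_def by auto
    obtain a b where ab: "b \<notin> Q" "v = quot_frac Q a b" using vc by (rule quot_frac_carrierE)
    obtain c d where cd: "d \<notin> Q" "u = quot_frac Q c d" using u(1) by (rule quot_frac_carrierE)
    have "v \<noteq> quot_frac Q 0 1"
    proof
      assume "v = quot_frac Q 0 1"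
      then have "c * a \<in> Q" using quot_frac_eq_zero_iff[OF ab(1)] ab(2) prime_ideal_mult_left by simp
      then have "quot_frac Q (c * a) (d * b) = quot_frac Q 0 1"
        using quot_frac_eq_zero_iff[OF prime_ideal_mult_notin[OF cd(1) ab(1)]] by simp
      then have "quot_frac Q 1 1 = quot_frac Q 0 1"
        using u(2) quot_frac_mult_eq[OF cd(1) ab(1)] cd(2) ab(2) by simp
      then show False using quot_frac_eq_zero_iff prime_ideal_one by simp
    qed
    then show "v \<in> quot_frac_carrier Q - {quot_frac Q 0 1}" using vc by simp
  next
    fix v assume "v \<in> quot_frac_carrier Q - {quot_frac Q 0 1}"
    then have vc: "v \<in> quot_frac_carrier Q" and v0: "v \<noteq> quot_frac Q 0 1" by auto
    obtain a b where ab: "b \<notin> Q" "v = quot_frac Q a b" using vc by (rule quot_frac_carrierE)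
    have a: "a \<notin> Q" using v0 ab quot_frac_eq_zero_iff by simp
    have ab0: "a * b \<notin> Q" "b * a \<notin> Q" using prime_ideal_mult_notin a ab(1) by blast+
    have "quot_frac Q (b * a) (a * b) = quot_frac Q 1 1" "quot_frac Q (a * b) (b * a) = quot_frac Q 1 1"
      by (rule quot_frac_cong; simp add: mult.commute ab0 prime_ideal_one)+
    then have "quot_frac_mult Q (quot_frac Q b a) v = quot_frac Q 1 1"
      "quot_frac_mult Q v (quot_frac Q b a) = quot_frac Q 1 1"
      using quot_frac_mult_eq[OF a ab(1)] quot_frac_mult_eq[OF ab(1) a] ab(2) by simp_all
    then show "v \<in> Units (quot_frac_field Q)"
      unfolding Units_def quot_frac_field_simps using vc quot_frac_in_carrier[OF a] by blast
  qed
qed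

lemma quot_frac_of_closed: "quot_frac_of Q r \<in> carrier (quot_frac_field Q)"
  unfolding quot_frac_of_def using quot_frac_in_carrier prime_ideal_one by simp

lemma quot_frac_of_add: "quot_frac_of Q (a + b) = quot_frac_of Q a \<oplus>\<^bsub>quot_frac_field Q\<^esub> quot_frac_of Q b"
  unfolding quot_frac_of_def using quot_frac_add_eq[OF prime_ideal_one prime_ideal_one] by simp

lemma quot_frac_of_mult: "quot_frac_of Q (a * b) = quot_frac_of Q a \<otimes>\<^bsub>quot_frac_field Q\<^esub> quot_frac_of Q b"
  unfolding quot_frac_of_def using quot_frac_mult_eq[OF prime_ideal_one prime_ideal_one] by simp

lemma quot_frac_of_one: "quot_frac_of Q 1 = \<one>\<^bsub>quot_frac_field Q\<^esub>"
  unfolding quot_frac_of_def by simp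

lemma quot_frac_uminus:
  assumes b: "b \<notin> Q"
  shows "\<ominus>\<^bsub>quot_frac_field Q\<^esub> quot_frac Q a b = quot_frac Q (- a) b"
proof -
  interpret K: field "quot_frac_field Q" by (rule quot_frac_field_is_field)
  have bb: "b * b \<notin> Q" using prime_ideal_mult_notin[OF b b] .
  have "quot_frac Q (- a) b \<oplus>\<^bsub>quot_frac_field Q\<^esub> quot_frac Q a b = quot_frac Q (- a * b + a * b) (b * b)"
    using quot_frac_add_eq[OF b b] by simp
  also have "\<dots> = quot_frac Q 0 1" by (rule quot_frac_cong[OF _ bb prime_ideal_one]) simp
  finally show ?thesis using K.minus_equality quot_frac_in_carrier[OF b] by simp
qed

lemma quot_frac_of_uminus: "quot_frac_of Q (- a) = \<ominus>\<^bsub>quot_frac_field Q\<^esub> quot_frac_of Q a"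
  unfolding quot_frac_of_def using quot_frac_uminus[OF prime_ideal_one] by simp

lemma quot_frac_of_power: "quot_frac_of Q (a ^ n) = quot_frac_of Q a [^]\<^bsub>quot_frac_field Q\<^esub> n"
proof (induction n)
  case 0
  then show ?case using quot_frac_of_one by simp
next
  case (Suc n)
  then show ?case using quot_frac_of_mult[of "a ^ n" a] by (simp add: mult.commute)
qed

lemma quot_frac_inv:
  assumes a: "a \<notin> Q" and b: "b \<notin> Q"
  shows "inv\<^bsub>quot_frac_field Q\<^esub> quot_frac Q a b = quot_frac Q b a"
proof -
  interpret K: field "quot_frac_field Q" by (rule quot_frac_field_is_field)
  have "quot_frac Q a b \<otimes>\<^bsub>quot_frac_field Q\<^esub> quot_frac Q b a = quot_frac Q (a * b) (b * a)"
    using quot_frac_mult_eq[OF b a] by simp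
  also have "\<dots> = quot_frac Q 1 1"
    by (rule quot_frac_cong[OF _ prime_ideal_mult_notin[OF b a] prime_ideal_one]) (simp add: mult.commute)
  finally show ?thesis
    using K.comm_inv_char quot_frac_in_carrier[OF a] quot_frac_in_carrier[OF b] by simp
qed

end


section \<open>Powers of a prime element\<close>

lemma prime_elem_power_dvd_mult_cancel:
  fixes p x :: "'a::idom"
  assumes p: "prime_elem p" and nx: "\<not> p dvd x"
  shows "p ^ n dvd x * y \<Longrightarrow> p ^ n dvd y"
proof (induction n arbitrary: y)
  case (Suc n)
  have "p dvd p ^ Suc n" by simp
  then have "p dvd x * y" using Suc.prems dvd_trans by blast
  then have "p dvd y" using p nx prime_elem_dvd_mult_iff by blast
  then obtain y' where y: "y = p * y'" by (auto simp: dvd_def)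
  have "p * p ^ n dvd p * (x * y')" using Suc.prems y by (simp add: ac_simps)
  then have "p ^ n dvd x * y'" using p by (simp add: prime_elem_def)
  then have "p ^ n dvd y'" by (rule Suc.IH)
  then show ?case using y by simp
qed simp

lemma prime_elem_power_dvd_prod_irreducible:
  fixes p :: "'a::idom"
  assumes p: "prime_elem p"
  shows "\<forall>z\<in>set xs. Factorial_Ring.irreducible z \<Longrightarrow> p ^ n dvd prod_list xs \<Longrightarrow> n \<le> length xs"
proof (induction xs arbitrary: n)
  case Nil
  then show ?case using prime_elem_not_unit[OF p] by (cases n) (auto dest: dvd_mult_left)
next
  case (Cons x xs)
  show ?case
  proof (cases n)
    case (Suc m)
    have irr: "Factorial_Ring.irreducible x" "\<forall>z\<in>set xs. Factorial_Ring.irreducible z"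
      using Cons.prems(1) by auto
    have d: "p ^ Suc m dvd x * prod_list xs" using Cons.prems(2) Suc by simp
    show ?thesis
    proof (cases "p dvd x")
      case True
      then obtain c where xc: "x = p * c" by (auto simp: dvd_def)
      then have "c dvd 1"
        using Factorial_Ring.irreducibleD[OF irr(1) xc] prime_elem_not_unit[OF p] by blast
      then obtain e where e: "1 = c * e" by (auto simp: dvd_def)
      have "p * p ^ m dvd p * (c * prod_list xs)" using d xc by (simp add: ac_simps)
      then have "p ^ m dvd c * prod_list xs" using p by (simp add: prime_elem_def)
      moreover have "prod_list xs = e * (c * prod_list xs)" using e by (simp add: ac_simps)
      ultimately have "p ^ m dvd prod_list xs" by (metis dvd_mult)
      then show ?thesis using Cons.IH irr(2) Suc by simp
    next
      case False
      then have "p ^ Suc m dvd prod_list xs" using prime_elem_power_dvd_mult_cancel[OF p _ d] by blast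
      then show ?thesis using Cons.IH irr(2) Suc by fastforce
    qed
  qed simp
qed

lemma atomic_domain_prime_elem_power_not_dvd:
  fixes p a :: "'a::idom"
  assumes at: "atomic_domain TYPE('a)" and p: "prime_elem p" and a: "a \<noteq> 0"
  shows "\<exists>n. \<not> p ^ n dvd a"
proof (cases "a dvd 1")
  case True
  then show ?thesis using prime_elem_not_unit[OF p] by (metis dvd_trans power_one_right)
next
  case False
  then obtain xs where "\<forall>z\<in>set xs. Factorial_Ring.irreducible z" "a = prod_list xs"
    using at a unfolding atomic_domain_def by blast
  then show ?thesis using prime_elem_power_dvd_prod_irreducible[OF p] by (metis Suc_n_not_le_n)
qed

lemma to_fract_power: "to_fract (x ^ n) = to_fract x ^ n"
  by (induction n) simp_all

text \<open>If every power of \<open>p\<close> divided \<open>a\<close>, then \<open>a\<close> would bound all powers of \<open>inverse p\<close>,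
  which complete integral closedness forbids.\<close>

lemma completely_integrally_closed_prime_elem_power_not_dvd:
  fixes p a :: "'a::idom"
  assumes cic: "completely_integrally_closed TYPE('a)" and p: "prime_elem p" and a: "a \<noteq> 0"
  shows "\<exists>n. \<not> p ^ n dvd a"
proof (rule ccontr)
  assume "\<nexists>n. \<not> p ^ n dvd a"
  then have all: "p ^ n dvd a" for n by blast
  have tp0: "to_fract p \<noteq> 0" using p by (simp add: prime_elem_def)
  have "to_fract a * inverse (to_fract p) ^ n \<in> range to_fract" for n
  proof -
    obtain c where c: "a = p ^ n * c" using all[of n] by (auto simp: dvd_def)
    have "to_fract a * inverse (to_fract p) ^ n = to_fract c * (to_fract p * inverse (to_fract p)) ^ n"
      unfolding c by (simp add: to_fract_power power_mult_distrib ac_simps)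
    also have "\<dots> = to_fract c" using tp0 by simp
    finally show ?thesis by simp
  qed
  then have "inverse (to_fract p) \<in> range to_fract"
    using cic a unfolding completely_integrally_closed_def by blast
  then obtain c where "inverse (to_fract p) = to_fract c" by blast
  then have "to_fract (p * c) = to_fract 1" using tp0 by (simp add: field_simps)
  then have "p dvd 1" by (metis dvd_triv_left to_fract_eq_iff)
  then show False using prime_elem_not_unit[OF p] by simp
qed

lemma prime_elem_power_factorization:
  fixes p a :: "'a::idom"
  assumes "\<not> p ^ n dvd a"
  shows "\<exists>k b. a = p ^ k * b \<and> \<not> p dvd b"
proof -
  obtain k where k: "p ^ k dvd a" "\<not> p ^ Suc k dvd a"
    using ex_least_nat_less[of "\<lambda>i. \<not> p ^ i dvd a", OF assms] by auto
  then obtain b where b: "a = p ^ k * b" by (auto simp: dvd_def)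
  have "\<not> p dvd b"
  proof
    assume "p dvd b"
    then have "p ^ k * p dvd p ^ k * b" by simp
    then show False using k(2) b by (simp add: ac_simps)
  qed
  then show ?thesis using b by blast
qed

lemma prime_elem_power_factorization_domain:
  fixes p :: "'a::idom"
  assumes "atomic_domain TYPE('a) \<or> completely_integrally_closed TYPE('a)" and p: "prime_elem p"
  shows "a \<noteq> 0 \<Longrightarrow> \<exists>k b. a = p ^ k * b \<and> \<not> p dvd b"
proof -
  assume a: "a \<noteq> 0"
  obtain n where "\<not> p ^ n dvd a"
    using assms(1) atomic_domain_prime_elem_power_not_dvd[OF _ p a]
      completely_integrally_closed_prime_elem_power_not_dvd[OF _ p a] by blast
  then show ?thesis by (rule prime_elem_power_factorization)
qed


section \<open>Prime ideals avoiding a multiplicative set\<close>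

lemma exists_maximal_ideal_disjoint:
  fixes M :: "'a::comm_ring_1 set"
  assumes "0 \<notin> M"
  shows "\<exists>Q. is_ideal Q \<and> Q \<inter> M = {} \<and> (\<forall>I. is_ideal I \<and> Q \<subseteq> I \<and> I \<inter> M = {} \<longrightarrow> I = Q)"
proof -
  let ?A = "{I. is_ideal I \<and> I \<inter> M = {}}"
  have "\<exists>Q\<in>?A. \<forall>I\<in>?A. Q \<subseteq> I \<longrightarrow> I = Q"
  proof (rule subset_Zorn_nonempty)
    have "{0} \<in> ?A" unfolding is_ideal_def using assms by auto
    then show "?A \<noteq> {}" by blast
  next
    fix C assume C: "C \<noteq> {}" "subset.chain ?A C"
    then have CA: "\<And>I. I \<in> C \<Longrightarrow> is_ideal I \<and> I \<inter> M = {}"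
      and comp: "\<And>I J. I \<in> C \<Longrightarrow> J \<in> C \<Longrightarrow> I \<subseteq> J \<or> J \<subseteq> I"
      unfolding subset_chain_def by blast+
    have "is_ideal (\<Union>C)" unfolding is_ideal_def
    proof (intro conjI ballI allI)
      show "0 \<in> \<Union>C" using C(1) CA unfolding is_ideal_def by blast
    next
      fix x y assume "x \<in> \<Union>C" "y \<in> \<Union>C"
      then obtain I J where IJ: "I \<in> C" "J \<in> C" "x \<in> I" "y \<in> J" by blast
      then have "(x \<in> I \<and> y \<in> I) \<or> (x \<in> J \<and> y \<in> J)" using comp by blast
      then show "x + y \<in> \<Union>C" using IJ CA unfolding is_ideal_def by blast
    next
      fix x r assume "x \<in> \<Union>C"
      then show "r * x \<in> \<Union>C" using CA unfolding is_ideal_def by blast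
    qed
    then show "\<Union>C \<in> ?A" using CA by blast
  qed
  then obtain Q where "Q \<in> ?A" "\<forall>I\<in>?A. Q \<subseteq> I \<longrightarrow> I = Q" by blast
  then show ?thesis by (intro exI[of _ Q]) auto
qed

lemma maximal_disjoint_ideal_meets:
  fixes M Q :: "'a::comm_ring_1 set"
  assumes Q: "is_ideal Q" and max: "\<forall>I. is_ideal I \<and> Q \<subseteq> I \<and> I \<inter> M = {} \<longrightarrow> I = Q"
    and a: "a \<notin> Q"
  shows "\<exists>q r. q \<in> Q \<and> q + r * a \<in> M"
proof -
  let ?Qa = "{q + r * a | q r. q \<in> Q}"
  have Q_ops: "0 \<in> Q" "\<And>x y. x \<in> Q \<Longrightarrow> y \<in> Q \<Longrightarrow> x + y \<in> Q" "\<And>x r. x \<in> Q \<Longrightarrow> r * x \<in> Q"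
    using Q unfolding is_ideal_def by blast+
  have "is_ideal ?Qa" unfolding is_ideal_def
  proof (intro conjI ballI allI)
    show "0 \<in> ?Qa" using Q_ops(1) by (intro CollectI exI[of _ 0]) simp
  next
    fix x y assume "x \<in> ?Qa" "y \<in> ?Qa"
    then obtain q1 r1 q2 r2 where "q1 \<in> Q" "x = q1 + r1 * a" "q2 \<in> Q" "y = q2 + r2 * a" by blast
    then show "x + y \<in> ?Qa" using Q_ops(2)
      by (intro CollectI exI[of _ "q1 + q2"] exI[of _ "r1 + r2"]) (auto simp: algebra_simps)
  next
    fix x s assume "x \<in> ?Qa"
    then obtain q r where "q \<in> Q" "x = q + r * a" by blast
    then show "s * x \<in> ?Qa" using Q_ops(3)
      by (intro CollectI exI[of _ "s * q"] exI[of _ "s * r"]) (auto simp: algebra_simps)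
  qed
  moreover have "Q \<subseteq> ?Qa"
  proof
    fix x assume "x \<in> Q"
    then show "x \<in> ?Qa" by (intro CollectI exI[of _ x] exI[of _ 0]) simp
  qed
  moreover have "a \<in> ?Qa" using Q_ops(1) by (intro CollectI exI[of _ 0] exI[of _ 1]) simp
  ultimately show ?thesis using max a by blast
qed

lemma maximal_disjoint_ideal_prime:
  fixes M Q :: "'a::comm_ring_1 set"
  assumes M: "1 \<in> M" "\<And>x y. x \<in> M \<Longrightarrow> y \<in> M \<Longrightarrow> x * y \<in> M"
    and Q: "is_ideal Q" "Q \<inter> M = {}" and max: "\<forall>I. is_ideal I \<and> Q \<subseteq> I \<and> I \<inter> M = {} \<longrightarrow> I = Q"
  shows "is_prime_ideal Q"
proof -
  have "a \<in> Q \<or> b \<in> Q" if ab: "a * b \<in> Q" for a b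
  proof (rule ccontr)
    assume "\<not> (a \<in> Q \<or> b \<in> Q)"
    then obtain q1 r1 q2 r2 where 1: "q1 \<in> Q" "q1 + r1 * a \<in> M" and 2: "q2 \<in> Q" "q2 + r2 * b \<in> M"
      using maximal_disjoint_ideal_meets[OF Q(1) max] by blast
    have "(q1 + r1 * a) * (q2 + r2 * b) = q1 * (q2 + r2 * b) + q2 * (r1 * a) + (r1 * r2) * (a * b)"
      by (simp add: algebra_simps)
    also have "\<dots> \<in> Q" using Q(1) 1(1) 2(1) ab unfolding is_ideal_def by (metis mult.commute)
    finally show False using M(2)[OF 1(2) 2(2)] Q(2) by blast
  qed
  moreover have "1 \<notin> Q" using M(1) Q(2) by blast
  ultimately show ?thesis using Q(1) unfolding is_prime_ideal_def by blast
qed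

lemma exists_prime_ideal_disjoint:
  fixes M :: "'a::comm_ring_1 set"
  assumes "0 \<notin> M" "1 \<in> M" "\<And>x y. x \<in> M \<Longrightarrow> y \<in> M \<Longrightarrow> x * y \<in> M"
  shows "\<exists>Q. is_prime_ideal Q \<and> Q \<inter> M = {}"
  using exists_maximal_ideal_disjoint[OF assms(1)] maximal_disjoint_ideal_prime[OF assms(2,3)] by blast


section \<open>The localization of the domain at the prime\<close>

locale domain_embedding =
  fixes f :: "'b::idom \<Rightarrow> 'a::comm_ring_1"
  assumes inj: "inj f" and hom_one: "f 1 = 1"
    and hom_add: "\<And>x y. f (x + y) = f x + f y" and hom_mult: "\<And>x y. f (x * y) = f x * f y"
begin

lemma hom_zero: "f 0 = 0"
  using hom_add[of 0 0] by simp

lemma hom_uminus: "f (- x) = - f x"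
  using hom_add[of x "- x"] hom_zero by (simp add: eq_neg_iff_add_eq_0 add.commute)

lemma hom_diff: "f (x - y) = f x - f y"
  using hom_add[of x "- y"] hom_uminus[of y] by simp

lemma hom_power: "f (x ^ n) = f x ^ n"
  by (induction n) (simp_all add: hom_one hom_mult)

lemma exists_prime_ideal_avoiding: "\<exists>Q. is_prime_ideal Q \<and> (\<forall>d. d \<noteq> 0 \<longrightarrow> f d \<notin> Q)"
proof -
  let ?M = "f ` (UNIV - {0})"
  have M0: "0 \<notin> ?M"
  proof
    assume "0 \<in> ?M"
    then obtain d where d: "d \<noteq> 0" "0 = f d" by blast
    then have "f d = f 0" using hom_zero by simp
    then show False using injD[OF inj] d(1) by blast
  qed
  have M1: "1 \<in> ?M" using hom_one by (intro image_eqI[of 1 f 1]) auto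
  have M2: "x * y \<in> ?M" if x: "x \<in> ?M" and y: "y \<in> ?M" for x y
  proof -
    obtain a where a: "a \<in> UNIV - {0}" "x = f a" using x by blast
    obtain b where b: "b \<in> UNIV - {0}" "y = f b" using y by blast
    show ?thesis using a b hom_mult[of a b] by (intro image_eqI[of _ _ "a * b"]) simp_all
  qed
  obtain Q where "is_prime_ideal Q" "Q \<inter> ?M = {}"
    using exists_prime_ideal_disjoint[OF M0 M1 M2] by blast
  then show ?thesis by blast
qed

definition localization_image :: "'a set \<Rightarrow> 'b \<Rightarrow> ('a \<times> 'a) set set" where
  "localization_image Q p = {quot_frac Q (f a) (f s) | a s. \<not> p dvd s}"

context
  fixes Q :: "'a set" and p :: 'b
  assumes Q: "is_prime_ideal Q" and avoid: "\<And>d. d \<noteq> 0 \<Longrightarrow> f d \<notin> Q" and p: "prime_elem p"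
begin

lemma image_not_multiple_notin: "\<not> p dvd s \<Longrightarrow> f s \<notin> Q"
  using avoid by (metis dvd_0_right)

lemma localization_image_subring: "subring (localization_image Q p) (quot_frac_field Q)"
proof -
  interpret K: field "quot_frac_field Q" by (rule quot_frac_field_is_field[OF Q])
  have mem: "quot_frac Q (f a) (f s) \<in> localization_image Q p" if "\<not> p dvd s" for a s
    unfolding localization_image_def using that by blast
  have npm: "\<not> p dvd (s * s')" if "\<not> p dvd s" "\<not> p dvd s'" for s s'
    using that prime_elem_dvd_mult_iff[OF p] by blast
  note ns = image_not_multiple_notin
  show ?thesis
  proof (rule K.subringI)
    show "localization_image Q p \<subseteq> carrier (quot_frac_field Q)"
      unfolding localization_image_def using quot_frac_in_carrier ns by auto
    show "\<one>\<^bsub>quot_frac_field Q\<^esub> \<in> localization_image Q p"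
      using mem[of 1 1] prime_elem_not_unit[OF p] hom_one by simp
  next
    fix x assume "x \<in> localization_image Q p"
    then obtain a s where h: "\<not> p dvd s" "x = quot_frac Q (f a) (f s)"
      unfolding localization_image_def by blast
    then have "\<ominus>\<^bsub>quot_frac_field Q\<^esub> x = quot_frac Q (f (- a)) (f s)"
      using quot_frac_uminus[OF Q ns[OF h(1)]] hom_uminus by simp
    then show "\<ominus>\<^bsub>quot_frac_field Q\<^esub> x \<in> localization_image Q p" using mem[OF h(1)] by simp
  next
    fix x y assume "x \<in> localization_image Q p" "y \<in> localization_image Q p"
    then obtain a s b s' where h: "\<not> p dvd s" "x = quot_frac Q (f a) (f s)"
        "\<not> p dvd s'" "y = quot_frac Q (f b) (f s')"
      unfolding localization_image_def by blast
    have "x \<otimes>\<^bsub>quot_frac_field Q\<^esub> y = quot_frac Q (f (a * b)) (f (s * s'))"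
      using quot_frac_mult_eq[OF Q ns[OF h(1)] ns[OF h(3)]] h hom_mult by simp
    then show "x \<otimes>\<^bsub>quot_frac_field Q\<^esub> y \<in> localization_image Q p"
      using mem[OF npm[OF h(1,3)]] by simp
    have "x \<oplus>\<^bsub>quot_frac_field Q\<^esub> y = quot_frac Q (f (a * s' + b * s)) (f (s * s'))"
      using quot_frac_add_eq[OF Q ns[OF h(1)] ns[OF h(3)]] h hom_mult hom_add by simp
    then show "x \<oplus>\<^bsub>quot_frac_field Q\<^esub> y \<in> localization_image Q p"
      using mem[OF npm[OF h(1,3)]] by simp
  qed
qed

lemma localization_image_inv_notin:
  "inv\<^bsub>quot_frac_field Q\<^esub> quot_frac_of Q (f p) \<notin> localization_image Q p"
proof
  have pQ: "f p \<notin> Q" using avoid p by (auto simp: prime_elem_def)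
  have inv: "inv\<^bsub>quot_frac_field Q\<^esub> quot_frac_of Q (f p) = quot_frac Q 1 (f p)"
    unfolding quot_frac_of_def using quot_frac_inv[OF Q pQ prime_ideal_one[OF Q]] .
  assume "inv\<^bsub>quot_frac_field Q\<^esub> quot_frac_of Q (f p) \<in> localization_image Q p"
  then obtain a s where h: "\<not> p dvd s" "quot_frac Q 1 (f p) = quot_frac Q (f a) (f s)"
    unfolding inv localization_image_def by blast
  then have "1 * f s - f a * f p \<in> Q"
    using quot_frac_eq_iff[OF Q pQ image_not_multiple_notin[OF h(1)]] by blast
  then have "f (s - a * p) \<in> Q" by (simp add: hom_diff hom_mult)
  then have "s - a * p = 0" using avoid by blast
  then have "s = a * p" by simp
  then show False using h(1) by simp
qed

lemma localization_image_uniformizer: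
  assumes fac: "\<And>a. a \<noteq> 0 \<Longrightarrow> \<exists>k b. a = p ^ k * b \<and> \<not> p dvd b"
  shows "field.uniformizer (quot_frac_field Q) (localization_image Q p) (quot_frac_of Q (f p))"
proof -
  interpret K: field "quot_frac_field Q" by (rule quot_frac_field_is_field[OF Q])
  let ?S = "localization_image Q p" and ?t = "quot_frac_of Q (f p)"
  note ns = image_not_multiple_notin and one = prime_ideal_one[OF Q]
  have zero: "quot_frac Q a b = \<zero>\<^bsub>quot_frac_field Q\<^esub> \<longleftrightarrow> a \<in> Q" if "b \<notin> Q" for a b
    using quot_frac_eq_zero_iff[OF Q that] by simp
  have "?t \<in> ?S" unfolding localization_image_def quot_frac_of_def
    using prime_elem_not_unit[OF p] hom_one by (metis (mono_tags, lifting) mem_Collect_eq)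
  moreover have "?t \<noteq> \<zero>\<^bsub>quot_frac_field Q\<^esub>"
    unfolding quot_frac_of_def using zero[OF one] avoid p by (auto simp: prime_elem_def)
  moreover have "\<exists>k::nat. \<exists>u. K.subring_unit ?S u \<and> x = ?t [^]\<^bsub>quot_frac_field Q\<^esub> k \<otimes>\<^bsub>quot_frac_field Q\<^esub> u"
    if x: "x \<in> ?S" "x \<noteq> \<zero>\<^bsub>quot_frac_field Q\<^esub>" for x
  proof -
    obtain a s where h: "\<not> p dvd s" "x = quot_frac Q (f a) (f s)"
      using x(1) unfolding localization_image_def by blast
    have "a \<noteq> 0" using x(2) h zero[OF ns[OF h(1)]] hom_zero prime_ideal_zero[OF Q] by auto
    then obtain k b where kb: "a = p ^ k * b" "\<not> p dvd b" using fac by blast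
    define u where "u = quot_frac Q (f b) (f s)"
    have fb: "f b \<notin> Q" using ns[OF kb(2)] .
    have "u \<in> ?S" unfolding u_def localization_image_def using h(1) by blast
    moreover have "u \<noteq> \<zero>\<^bsub>quot_frac_field Q\<^esub>" unfolding u_def using zero[OF ns[OF h(1)]] fb by simp
    moreover have "inv\<^bsub>quot_frac_field Q\<^esub> u \<in> ?S"
      unfolding u_def localization_image_def using quot_frac_inv[OF Q fb ns[OF h(1)]] kb(2) by blast
    moreover have "x = ?t [^]\<^bsub>quot_frac_field Q\<^esub> k \<otimes>\<^bsub>quot_frac_field Q\<^esub> u"
    proof -
      have "?t [^]\<^bsub>quot_frac_field Q\<^esub> k = quot_frac Q (f p ^ k) 1"
        using quot_frac_of_power[OF Q, of "f p" k] unfolding quot_frac_of_def by simp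
      then have "?t [^]\<^bsub>quot_frac_field Q\<^esub> k \<otimes>\<^bsub>quot_frac_field Q\<^esub> u = quot_frac Q (f p ^ k * f b) (1 * f s)"
        unfolding u_def using quot_frac_mult_eq[OF Q one ns[OF h(1)]] by simp
      then show ?thesis using h kb by (simp add: hom_mult hom_power)
    qed
    ultimately show ?thesis unfolding K.subring_unit_def by blast
  qed
  ultimately show ?thesis
    unfolding K.uniformizer_def
    using localization_image_subring localization_image_inv_notin by blast
qed

end

end


section \<open>Conch maximal subrings\<close>

lemma is_subringD:
  assumes "is_subring W"
  shows "1 \<in> W" "\<And>x y. x \<in> W \<Longrightarrow> y \<in> W \<Longrightarrow> x + y \<in> W" "\<And>x y. x \<in> W \<Longrightarrow> y \<in> W \<Longrightarrow> x * y \<in> W"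
    "\<And>x. x \<in> W \<Longrightarrow> - x \<in> W"
  using assms unfolding is_subring_def by auto

lemma is_subring_power: "is_subring W \<Longrightarrow> x \<in> W \<Longrightarrow> x ^ n \<in> W"
  by (induction n) (auto dest: is_subringD)

lemma is_subring_chain_Union:
  assumes "C \<noteq> {}" "\<And>W. W \<in> C \<Longrightarrow> is_subring W" "subset.chain C C"
  shows "is_subring (\<Union>C)"
proof -
  have pair: "\<exists>W\<in>C. a \<in> W \<and> b \<in> W" if "a \<in> \<Union>C" "b \<in> \<Union>C" for a b
    using that assms(3) unfolding subset_chain_def by blast
  show ?thesis
    unfolding is_subring_def
  proof (intro conjI ballI)
    show "1 \<in> \<Union>C" using assms(1) assms(2)[THEN is_subringD(1)] by blast
    show "a + b \<in> \<Union>C" "a * b \<in> \<Union>C" if "a \<in> \<Union>C" "b \<in> \<Union>C" for a b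
      using pair[OF that] assms(2)[THEN is_subringD(2)] assms(2)[THEN is_subringD(3)] by blast+
    show "- a \<in> \<Union>C" if "a \<in> \<Union>C" for a using that assms(2)[THEN is_subringD(4)] by blast
  qed
qed

lemma exists_maximal_subring_avoiding:
  fixes A :: "'a::comm_ring_1 set"
  assumes "is_subring A" "x \<notin> A"
  shows "\<exists>V. is_subring V \<and> A \<subseteq> V \<and> x \<notin> V \<and> (\<forall>W. is_subring W \<and> V \<subseteq> W \<and> x \<notin> W \<longrightarrow> W = V)"
proof -
  let ?H = "{W. is_subring W \<and> A \<subseteq> W \<and> x \<notin> W}"
  have "\<exists>V\<in>?H. \<forall>W\<in>?H. V \<subseteq> W \<longrightarrow> W = V"
  proof (rule subset_Zorn_nonempty)
    show "?H \<noteq> {}" using assms by blast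
  next
    fix C assume C: "C \<noteq> {}" "subset.chain ?H C"
    then have "is_subring (\<Union>C)"
      using is_subring_chain_Union[OF C(1)] unfolding subset_chain_def by blast
    then show "\<Union>C \<in> ?H" using C unfolding subset_chain_def by blast
  qed
  then obtain V where "V \<in> ?H" "\<forall>W\<in>?H. V \<subseteq> W \<longrightarrow> W = V" by blast
  then show ?thesis by (intro exI[of _ V]) auto
qed

text \<open>A subring maximal among those containing \<open>A\<close> but not \<open>x\<close> is a maximal subring, since any
  larger subring contains \<open>x\<close> and with it every \<open>y = x [^] k * (t [^] k * y)\<close>.\<close>

lemma exists_conch_maximal_subring:
  fixes A :: "'a::comm_ring_1 set"
  assumes A: "is_subring A" and tA: "t \<in> A" and xA: "x \<notin> A" and tx: "t * x = 1"
    and absorb: "\<And>y. \<exists>k::nat. t ^ k * y \<in> A"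
  shows "\<exists>V::'a set. conch_maximal_subring V"
proof -
  obtain V where V: "is_subring V" "A \<subseteq> V" "x \<notin> V"
      and max: "\<And>W. is_subring W \<Longrightarrow> V \<subseteq> W \<Longrightarrow> x \<notin> W \<Longrightarrow> W = V"
    using exists_maximal_subring_avoiding[OF A xA] by blast
  have "W = UNIV" if W: "is_subring W" "V \<subseteq> W" "x \<in> W" for W
  proof -
    have "y \<in> W" for y
    proof -
      obtain k where "t ^ k * y \<in> A" using absorb by blast
      then have "x ^ k * (t ^ k * y) \<in> W" using W V(2) is_subring_power is_subringD(3) by blast
      moreover have "x ^ k * (t ^ k * y) = y" using tx by (simp add: power_mult_distrib[symmetric] ac_simps)
      ultimately show ?thesis by simp
    qed
    then show ?thesis by blast
  qed
  then have "maximal_subring V" unfolding maximal_subring_def using V(1,3) max by blast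
  moreover have "conches V x" unfolding conches_def
    using V tA tx max by (intro exI[of _ t]) (auto simp: mult.commute)
  moreover have "x dvd 1" using tx by (metis dvd_triv_right)
  ultimately show ?thesis unfolding conch_maximal_subring_def by blast
qed

lemma exists_subring_localizing_to_ring:
  fixes Q :: "'a::comm_ring_1 set"
  assumes Q: "is_prime_ideal Q" and S: "field.uniformizer (quot_frac_field Q) S (quot_frac_of Q t)"
    and tx: "t * x = 1"
  shows "\<exists>A. is_subring A \<and> t \<in> A \<and> x \<notin> A \<and> (\<forall>y. \<exists>k::nat. t ^ k * y \<in> A)"
proof -
  interpret K: field "quot_frac_field Q" by (rule quot_frac_field_is_field[OF Q])
  obtain V where V: "subring V (quot_frac_field Q)" "quot_frac_of Q t \<in> V"
      "inv\<^bsub>quot_frac_field Q\<^esub> quot_frac_of Q t \<notin> V"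
      and absorb: "\<forall>y\<in>carrier (quot_frac_field Q).
         \<exists>k::nat. quot_frac_of Q t [^]\<^bsub>quot_frac_field Q\<^esub> k \<otimes>\<^bsub>quot_frac_field Q\<^esub> y \<in> V"
    using K.exists_subring_localizing_to_field[OF S] by blast
  let ?A = "{r. quot_frac_of Q r \<in> V}"
  have "is_subring ?A"
    unfolding is_subring_def
    using subringE(3,5,6,7)[OF V(1)] quot_frac_of_one[OF Q] quot_frac_of_add[OF Q] quot_frac_of_mult[OF Q]
      quot_frac_of_uminus[OF Q]
    by simp
  moreover have "x \<notin> ?A"
  proof -
    have "quot_frac_of Q t \<otimes>\<^bsub>quot_frac_field Q\<^esub> quot_frac_of Q x = \<one>\<^bsub>quot_frac_field Q\<^esub>"
      using quot_frac_of_mult[OF Q, of t x] quot_frac_of_one[OF Q] tx by simp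
    then have "inv\<^bsub>quot_frac_field Q\<^esub> quot_frac_of Q t = quot_frac_of Q x"
      using K.comm_inv_char quot_frac_of_closed[OF Q] by simp
    then show ?thesis using V(3) by simp
  qed
  moreover have "\<exists>k::nat. t ^ k * y \<in> ?A" for y
  proof -
    obtain k :: nat
      where "quot_frac_of Q t [^]\<^bsub>quot_frac_field Q\<^esub> k \<otimes>\<^bsub>quot_frac_field Q\<^esub> quot_frac_of Q y \<in> V"
      using bspec[OF absorb quot_frac_of_closed[OF Q, of y]] by blast
    then show ?thesis using quot_frac_of_mult[OF Q] quot_frac_of_power[OF Q] by auto
  qed
  ultimately show ?thesis using V(2) by blast
qed

theorem corollary2p2:
  fixes f :: "'b::idom \<Rightarrow> 'a::comm_ring_1"
  assumes "atomic_domain TYPE('b) \<or> completely_integrally_closed TYPE('b)"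
    and "inj f"
    and "f 1 = 1"
    and "\<And>x y. f (x + y) = f x + f y"
    and "\<And>x y. f (x * y) = f x * f y"
    and "\<exists>p::'b. prime_elem p \<and> f p dvd 1"
  shows "\<exists>V::'a set. conch_maximal_subring V"
proof -
  interpret domain_embedding f using assms(2-5) by unfold_locales
  obtain p x where p: "prime_elem p" and px: "f p * x = 1" using assms(6) by (auto elim: dvdE)
  obtain Q where Q: "is_prime_ideal Q" and avoid: "\<And>d. d \<noteq> 0 \<Longrightarrow> f d \<notin> Q"
    using exists_prime_ideal_avoiding by blast
  have "field.uniformizer (quot_frac_field Q) (localization_image Q p) (quot_frac_of Q (f p))"
    using localization_image_uniformizer[OF Q avoid p] prime_elem_power_factorization_domain[OF assms(1) p]
    by blast
  then obtain A where "is_subring A" "f p \<in> A" "x \<notin> A" "\<forall>y. \<exists>k::nat. f p ^ k * y \<in> A"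
    using exists_subring_localizing_to_ring[OF Q _ px] by blast
  then show ?thesis using exists_conch_maximal_subring px by blast
qed

end
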